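(* Under the setup of the context, there is a constant $C>0$ such that for all $n\in\mathbb N$, $$E\Big(\sum_{k=0}^nR(k)\Big)^2\le Cn,\qquad R(k)=\prod_{j=0}^\ell X_j(q_j(k))-\prod_{j=0}^\ell a_j .$$
   Context: $(\Omega,\mathcal F,P)$ is a probability space, $\ell\ge1$, and $X_0,X_1,\dots,X_\ell$ are real stationary processes $X_j(n)$, $n\ge0$, with $|X_j(n)|\le D$ a.s. $\{\mathcal F_{kl}\}$ is a family of sub-$\sigma$-algebras with $\mathcal F_{kl}\subset\mathcal F_{k'l'}$ for $k'\le k$, $l'\ge l$; $\alpha(n)=\sup_{k\ge0}\sup_{A\in\mathcal F_{-\infty,k},B\in\mathcal F_{k+n,\infty}}|P(A\cap B)-P(A)P(B)|$, $\beta_j(n)=\sup_{m\ge0}E|X_j(m)-E(X_j(m)\mid\mathcal F_{m-n,m+n})|$, and $\alpha(n)+\max_{0\le j\le\ell}\beta_j(n)\le\kappa^{-1}e^{-\kappa n}$ for some $\kappa>0$. $q_0(n)=n$, $q_1(n)=rn+p$ with integers $r\ge2$, $p\ge0$; $q_2,\dots,q_\ell$ are nonnegative-integer-valued and for some $\gamma\in(0,1)$, $n_0>1$ and all $n\ge n_0$: $q_j(n+1)\ge q_j(n)+n^\gamma$ ($j=2,\dots,\ell$) and $q_{j+1}([n^{1-\gamma}])\ge q_j(n)n^\gamma$ ($j=1,\dots,\ell-1$). $a_j=EX_j(0)$. *)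

theory Defs
  imports "HOL-Probability.Probability"
begin

definition ext_int_idx :: "ereal set" where
  "ext_int_idx = {ereal (real_of_int i) | i. True} \<union> {\<infinity>, -\<infinity>}"

definition stationary_proc :: "'a measure \<Rightarrow> (nat \<Rightarrow> 'a \<Rightarrow> real) \<Rightarrow> bool" where
  "stationary_proc M Y \<longleftrightarrow>
     (\<forall>m::nat. distr M (PiM UNIV (\<lambda>_. borel)) (\<lambda>\<omega> n. Y (n + m) \<omega>)
             = distr M (PiM UNIV (\<lambda>_. borel)) (\<lambda>\<omega> n. Y n \<omega>))"

definition alpha_mix :: "'a measure \<Rightarrow> (ereal \<Rightarrow> ereal \<Rightarrow> 'a measure) \<Rightarrow> nat \<Rightarrow> real" where
  "alpha_mix M F n = Sup {\<bar>measure M (A \<inter> B) - measure M A * measure M B\<bar> | k A B.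
       A \<in> sets (F (-\<infinity>) (ereal (real k))) \<and> B \<in> sets (F (ereal (real (k + n))) \<infinity>)}"

definition beta_mix :: "'a measure \<Rightarrow> (ereal \<Rightarrow> ereal \<Rightarrow> 'a measure) \<Rightarrow> (nat \<Rightarrow> 'a \<Rightarrow> real) \<Rightarrow> nat \<Rightarrow> real" where
  "beta_mix M F Y n = Sup {(\<integral>\<omega>. \<bar>Y m \<omega> - real_cond_exp M (F (ereal (real m - real n)) (ereal (real m + real n))) (Y m) \<omega>\<bar> \<partial>M) | m. True}"

end

theory Submission imports Defs begin

(* Expanding the square, E(sum R)^2 = sum_{k,k'} E R(k) R(k'), and every E R(k) R(k') is
   controlled by the deviation |E prod_i Z_i - prod_i E Z_i| of products of the factors
   X_j(q_j k), X_j(q_j k').  To bound such a deviation, clip the processes to [-D, D] and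
   replace each factor at time t by a bounded F(t-h, t+h)-measurable approximation (error
   beta(h)).  The covariance inequality for alpha-mixing sigma-algebras then splits off the
   factor at the largest time t_max at cost O(rho^g), where g is the gap to the next time,
   h = g div 3 and rho = exp(-kappa/3).  Induction on the number of factors gives
       |E prod Z_i - prod E Z_i| <= C * sum_{i <> i'} rho^|t_i - t_i'|.
   Finally the growth conditions make each q_j injective on a tail and force
   |q_i k - q_i' k| >= k for large k, so these weights summed over k, k' <= n are O(n). *)

section \<open>Products of bounded reals\<close>

lemma abs_prod_le_power:
  fixes z :: "'b \<Rightarrow> real"
  assumes "\<And>i. i \<in> I \<Longrightarrow> \<bar>z i\<bar> \<le> D"
  shows "\<bar>\<Prod>i\<in>I. z i\<bar> \<le> D ^ card I"
proof (cases "finite I")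
  case True
  have "\<bar>\<Prod>i\<in>I. z i\<bar> = (\<Prod>i\<in>I. \<bar>z i\<bar>)" by (simp add: abs_prod)
  also have "\<dots> \<le> (\<Prod>i\<in>I. D)" by (rule prod_mono) (use assms in auto)
  finally show ?thesis by simp
next
  case False then show ?thesis using assms by simp
qed

text \<open>Telescoping: the product map is Lipschitz on the cube \<open>[-D, D]^I\<close> for the
  l1-distance, with constant \<open>D ^ card I\<close>.\<close>
lemma abs_prod_diff_le:
  fixes z w :: "'b \<Rightarrow> real"
  assumes "finite I" "1 \<le> D" "\<And>i. i \<in> I \<Longrightarrow> \<bar>z i\<bar> \<le> D" "\<And>i. i \<in> I \<Longrightarrow> \<bar>w i\<bar> \<le> D"
  shows "\<bar>(\<Prod>i\<in>I. z i) - (\<Prod>i\<in>I. w i)\<bar> \<le> D ^ card I * (\<Sum>i\<in>I. \<bar>z i - w i\<bar>)"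
  using assms
proof (induction I rule: finite_induct)
  case empty then show ?case by simp
next
  case (insert x F)
  have pz: "\<bar>\<Prod>i\<in>F. z i\<bar> \<le> D ^ card F" by (rule abs_prod_le_power) (use insert in auto)
  have IH: "\<bar>(\<Prod>i\<in>F. z i) - (\<Prod>i\<in>F. w i)\<bar> \<le> D ^ card F * (\<Sum>i\<in>F. \<bar>z i - w i\<bar>)"
    using insert by auto
  have wx: "\<bar>w x\<bar> \<le> D" using insert by auto
  have "(\<Prod>i\<in>insert x F. z i) - (\<Prod>i\<in>insert x F. w i)
      = (z x - w x) * (\<Prod>i\<in>F. z i) + w x * ((\<Prod>i\<in>F. z i) - (\<Prod>i\<in>F. w i))"
    using insert by (simp add: algebra_simps)
  also have "\<bar>\<dots>\<bar> \<le> \<bar>z x - w x\<bar> * D ^ card F + D * (D ^ card F * (\<Sum>i\<in>F. \<bar>z i - w i\<bar>))"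
    by (rule order_trans[OF abs_triangle_ineq])
       (use insert(4) in \<open>auto simp: abs_mult intro!: add_mono mult_mono pz IH wx\<close>)
  also have "\<dots> \<le> D ^ card (insert x F) * (\<Sum>i\<in>insert x F. \<bar>z i - w i\<bar>)"
  proof -
    have "D ^ card F \<le> D ^ Suc (card F)" using insert(4) by (simp add: power_increasing)
    then have "\<bar>z x - w x\<bar> * D ^ card F \<le> \<bar>z x - w x\<bar> * D ^ Suc (card F)"
      by (rule mult_left_mono) simp
    then show ?thesis using insert by (simp add: algebra_simps)
  qed
  finally show ?case .
qed

lemma abs_mult_diff_le:
  fixes v1 v2 z1 z2 :: real
  shows "\<bar>v1 * v2 - z1 * z2\<bar> \<le> \<bar>v1\<bar> * \<bar>v2 - z2\<bar> + \<bar>z2\<bar> * \<bar>v1 - z1\<bar>"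
proof -
  have "v1 * v2 - z1 * z2 = v1 * (v2 - z2) + z2 * (v1 - z1)" by (simp add: algebra_simps)
  then show ?thesis by (metis abs_mult abs_triangle_ineq)
qed

lemma decorrelation_step_arith:
  fixes K D x P P1 :: real
  assumes K: "0 \<le> K" and D: "1 \<le> D" and x: "0 \<le> x" and P1: "0 \<le> P1" and P: "P1 + x \<le> P"
  shows "K * x + D * (K * m * D ^ m * P1) \<le> K * real (Suc m) * D ^ Suc m * P"
proof -
  let ?c = "real (Suc m) * D ^ Suc m"
  have "1 * 1 \<le> ?c" by (rule mult_mono) (use one_le_power[OF D, of "Suc m"] in auto)
  then have c1: "1 \<le> ?c" by simp
  have c2: "real m * D ^ Suc m \<le> ?c" using D by (intro mult_right_mono) auto
  have "K * x + D * (K * m * D ^ m * P1) = K * (x + (real m * D ^ Suc m) * P1)" by (simp add: algebra_simps)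
  also have "\<dots> \<le> K * (?c * x + ?c * P1)"
    using c1 c2 x P1 K D by (intro mult_left_mono add_mono mult_right_mono) (simp_all add: mult_le_cancel_right1)
  also have "\<dots> = K * ?c * (P1 + x)" by (simp add: algebra_simps)
  also have "\<dots> \<le> K * ?c * P" using K D c1 by (intro mult_left_mono[OF P]) simp
  finally show ?thesis by simp
qed

section \<open>Covariance inequality for alpha-mixing sigma-algebras\<close>

lemma integrable_bounded:
  assumes "finite_measure M" "f \<in> borel_measurable M" "\<And>x. x \<in> space M \<Longrightarrow> \<bar>f x\<bar> \<le> (B::real)"
  shows "integrable M f"
  by (rule finite_measure.integrable_const_bound[OF assms(1) _ assms(2), where B=B])
     (use assms(3) in auto)

context prob_space
begin

lemma abs_integral_le_bound:
  assumes "f \<in> borel_measurable M" "\<And>x. x \<in> space M \<Longrightarrow> \<bar>f x\<bar> \<le> (B::real)"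
  shows "\<bar>\<integral>x. f x \<partial>M\<bar> \<le> B"
proof -
  have "integrable M f" by (rule integrable_bounded[OF finite_measure_axioms assms])
  have "\<bar>\<integral>x. f x \<partial>M\<bar> \<le> (\<integral>x. \<bar>f x\<bar> \<partial>M)" by (rule integral_abs_bound)
  also have "\<dots> \<le> B" by (rule integral_le_const) (use \<open>integrable M f\<close> assms in auto)
  finally show ?thesis .
qed

text \<open>Conditioning on \<open>G\<close> reduces the covariance of a \<open>G\<close>-measurable \<open>f\<close>, \<open>|f| \<le> a\<close>, with
  \<open>g\<close> to \<open>a\<close> times the covariance of the sign \<open>sgn u\<close> of a \<open>G\<close>-measurable \<open>u\<close> with \<open>g\<close>
  (take \<open>u = E(g - E g | G)\<close>).\<close>
lemma covariance_le_sign_covariance: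
  fixes f g :: "'a \<Rightarrow> real"
  assumes sub: "subalgebra M G" and fG: "f \<in> borel_measurable G"
    and fb: "\<And>x. x \<in> space M \<Longrightarrow> \<bar>f x\<bar> \<le> a"
    and gM: "g \<in> borel_measurable M" and gb: "\<And>x. x \<in> space M \<Longrightarrow> \<bar>g x\<bar> \<le> b"
  shows "\<exists>u \<in> borel_measurable G. \<bar>(\<integral>x. f x * g x \<partial>M) - (\<integral>x. f x \<partial>M) * (\<integral>x. g x \<partial>M)\<bar>
           \<le> a * ((\<integral>x. sgn (u x) * g x \<partial>M) - (\<integral>x. sgn (u x) \<partial>M) * (\<integral>x. g x \<partial>M))"
proof -
  have "finite_measure_subalgebra M G" by unfold_locales (rule sub)
  then interpret sigma_finite_subalgebra M G by (rule finite_measure_subalgebra_is_sigma_finite)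
  have fM: "f \<in> borel_measurable M" by (rule measurable_from_subalg[OF sub fG])
  define m where "m = (\<integral>x. g x \<partial>M)"
  define g0 where "g0 = (\<lambda>x. g x - m)"
  define u where "u = real_cond_exp M G g0"
  have g0M: "g0 \<in> borel_measurable M" unfolding g0_def using gM by measurable
  have ig: "integrable M g" by (rule integrable_bounded[OF finite_measure_axioms gM gb])
  have ifn: "integrable M f" by (rule integrable_bounded[OF finite_measure_axioms fM fb])
  have ig0: "integrable M g0" unfolding g0_def using ig by auto
  have ifg: "integrable M (\<lambda>x. f x * g x)"
    by (rule integrable_bounded[OF finite_measure_axioms, where B="a*b"]) (use fM gM in measurable,
      auto simp: abs_mult intro!: mult_mono fb gb order_trans[OF abs_ge_zero gb] order_trans[OF abs_ge_zero fb])
  have ifg0: "integrable M (\<lambda>x. f x * g0 x)" unfolding g0_def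
    using ifg ifn by (simp add: right_diff_distrib)
  have uG: "u \<in> borel_measurable G" unfolding u_def by simp
  have uM: "u \<in> borel_measurable M" by (rule measurable_from_subalg[OF sub uG])
  have sG: "(\<lambda>x. sgn (u x)) \<in> borel_measurable G" using uG by measurable
  have centred: "(\<integral>x. f x * g x \<partial>M) - (\<integral>x. f x \<partial>M) * m = (\<integral>x. f x * u x \<partial>M)"
  proof -
    have "(\<integral>x. f x * g x \<partial>M) - (\<integral>x. f x \<partial>M) * m = (\<integral>x. f x * g0 x \<partial>M)"
      unfolding g0_def using ifg ifn by (simp add: right_diff_distrib mult.commute)
    also have "\<dots> = (\<integral>x. f x * u x \<partial>M)"
      unfolding u_def using real_cond_exp_intg(2)[OF ifg0 fG g0M] by simp
    finally show ?thesis .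
  qed
  have "\<bar>\<integral>x. f x * u x \<partial>M\<bar> \<le> (\<integral>x. \<bar>f x * u x\<bar> \<partial>M)" by (rule integral_abs_bound)
  also have "\<dots> \<le> (\<integral>x. a * \<bar>u x\<bar> \<partial>M)"
  proof (rule integral_mono)
    show "integrable M (\<lambda>x. \<bar>f x * u x\<bar>)"
      unfolding u_def using real_cond_exp_intg(1)[OF ifg0 fG g0M] by simp
    show "integrable M (\<lambda>x. a * \<bar>u x\<bar>)" unfolding u_def using ig0 by (simp add: real_cond_exp_int(1))
    fix x assume "x \<in> space M" then show "\<bar>f x * u x\<bar> \<le> a * \<bar>u x\<bar>"
      by (simp add: abs_mult mult_right_mono fb)
  qed
  also have "\<dots> = a * (\<integral>x. sgn (u x) * u x \<partial>M)"
    by (simp add: abs_sgn mult.commute)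
  also have "(\<integral>x. sgn (u x) * u x \<partial>M) = (\<integral>x. sgn (u x) * g0 x \<partial>M)"
  proof -
    have "integrable M (\<lambda>x. sgn (u x) * g0 x)"
      by (rule Bochner_Integration.integrable_bound[OF ig0]) (use uM g0M in measurable, auto simp: abs_mult abs_sgn_eq)
    from real_cond_exp_intg(2)[OF this sG g0M] show ?thesis unfolding u_def by simp
  qed
  also have "(\<integral>x. sgn (u x) * g0 x \<partial>M) = (\<integral>x. sgn (u x) * g x \<partial>M) - (\<integral>x. sgn (u x) \<partial>M) * m"
  proof -
    have i1: "integrable M (\<lambda>x. sgn (u x) * g x)"
      by (rule Bochner_Integration.integrable_bound[OF ig]) (use uM gM in measurable, auto simp: abs_mult abs_sgn_eq)
    have i2: "integrable M (\<lambda>x. sgn (u x))"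
    proof (rule integrable_bounded[OF finite_measure_axioms, where B=1])
      show "(\<lambda>x. sgn (u x)) \<in> borel_measurable M" using uM by measurable
    qed (simp add: abs_sgn_eq)
    show ?thesis unfolding g0_def using i1 i2 by (simp add: right_diff_distrib mult.commute)
  qed
  finally show ?thesis using centred uG unfolding m_def by auto
qed

text \<open>For sign functions the covariance is a signed sum of four terms
  \<open>P(A \<inter> B) - P(A) P(B)\<close> with \<open>A \<in> G1\<close>, \<open>B \<in> G2\<close>.\<close>
lemma sign_covariance_le_alpha:
  fixes u v :: "'a \<Rightarrow> real"
  assumes s1: "subalgebra M G1" and s2: "subalgebra M G2"
    and uG: "u \<in> borel_measurable G1" and vG: "v \<in> borel_measurable G2"
    and al: "\<And>A B. A \<in> sets G1 \<Longrightarrow> B \<in> sets G2 \<Longrightarrow>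
               \<bar>measure M (A \<inter> B) - measure M A * measure M B\<bar> \<le> \<alpha>"
  shows "\<bar>(\<integral>x. sgn (u x) * sgn (v x) \<partial>M) - (\<integral>x. sgn (u x) \<partial>M) * (\<integral>x. sgn (v x) \<partial>M)\<bar> \<le> 4 * \<alpha>"
proof -
  have sp1: "space G1 = space M" and sp2: "space G2 = space M"
    using s1 s2 by (auto simp: subalgebra_def)
  define A1 where "A1 = {x \<in> space M. u x > 0}"
  define A2 where "A2 = {x \<in> space M. u x < 0}"
  define B1 where "B1 = {x \<in> space M. v x > 0}"
  define B2 where "B2 = {x \<in> space M. v x < 0}"
  have A: "A1 \<in> sets G1" "A2 \<in> sets G1"
    unfolding A1_def A2_def sp1[symmetric] using uG by measurable
  have B: "B1 \<in> sets G2" "B2 \<in> sets G2"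
    unfolding B1_def B2_def sp2[symmetric] using vG by measurable
  have sets: "A1 \<in> sets M" "A2 \<in> sets M" "B1 \<in> sets M" "B2 \<in> sets M"
    using A B s1 s2 by (auto simp: subalgebra_def)
  have su: "\<And>x. x \<in> space M \<Longrightarrow> sgn (u x) = indicator A1 x - indicator A2 x"
    by (auto simp: A1_def A2_def sgn_if indicator_def)
  have sv: "\<And>x. x \<in> space M \<Longrightarrow> sgn (v x) = indicator B1 x - indicator B2 x"
    by (auto simp: B1_def B2_def sgn_if indicator_def)
  have ii: "\<And>A. A \<in> sets M \<Longrightarrow> integrable M (indicator A :: 'a \<Rightarrow> real)"
    by (rule integrable_bounded[OF finite_measure_axioms, where B=1]) (auto simp: indicator_def)
  have mi: "\<And>A B. indicator A x * indicator B x = (indicator (A \<inter> B) x :: real)" for x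
    by (auto simp: indicator_def)
  have intI: "\<And>A. A \<in> sets M \<Longrightarrow> (\<integral>x. indicator A x \<partial>M) = measure M A"
    by (simp add: integral_indicator Int_absorb2 sets.sets_into_space)
  define c where "c A B = measure M (A \<inter> B) - measure M A * measure M B" for A B
  have "(\<integral>x. sgn (u x) * sgn (v x) \<partial>M) =
     (\<integral>x. indicator (A1 \<inter> B1) x - indicator (A1 \<inter> B2) x - indicator (A2 \<inter> B1) x + indicator (A2 \<inter> B2) x \<partial>M)"
    by (rule Bochner_Integration.integral_cong[OF refl]) (auto simp: su sv algebra_simps mi)
  also have "\<dots> = measure M (A1 \<inter> B1) - measure M (A1 \<inter> B2) - measure M (A2 \<inter> B1) + measure M (A2 \<inter> B2)"
    using sets by (simp add: ii intI Int_absorb2 sets.Int)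
  finally have e1: "(\<integral>x. sgn (u x) * sgn (v x) \<partial>M) = measure M (A1 \<inter> B1) - measure M (A1 \<inter> B2) - measure M (A2 \<inter> B1) + measure M (A2 \<inter> B2)" .
  have e2: "(\<integral>x. sgn (u x) \<partial>M) = measure M A1 - measure M A2"
    by (subst Bochner_Integration.integral_cong[OF refl su]) (use sets in \<open>auto simp: ii intI\<close>)
  have e3: "(\<integral>x. sgn (v x) \<partial>M) = measure M B1 - measure M B2"
    by (subst Bochner_Integration.integral_cong[OF refl sv]) (use sets in \<open>auto simp: ii intI\<close>)
  have "(\<integral>x. sgn (u x) * sgn (v x) \<partial>M) - (\<integral>x. sgn (u x) \<partial>M) * (\<integral>x. sgn (v x) \<partial>M)
      = c A1 B1 - c A1 B2 - c A2 B1 + c A2 B2"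
    unfolding e1 e2 e3 c_def by (simp add: algebra_simps)
  moreover have "\<bar>c A1 B1\<bar> \<le> \<alpha>" "\<bar>c A1 B2\<bar> \<le> \<alpha>" "\<bar>c A2 B1\<bar> \<le> \<alpha>" "\<bar>c A2 B2\<bar> \<le> \<alpha>"
    unfolding c_def using A B by (auto intro: al)
  ultimately show ?thesis by linarith
qed

text \<open>Apply the
  sign reduction once to \<open>f\<close> and once to \<open>g\<close>, then compare signs.\<close>
lemma covariance_le_alpha:
  fixes f g :: "'a \<Rightarrow> real"
  assumes s1: "subalgebra M G1" and s2: "subalgebra M G2"
    and fG: "f \<in> borel_measurable G1" and fb: "\<And>x. x \<in> space M \<Longrightarrow> \<bar>f x\<bar> \<le> a"
    and gG: "g \<in> borel_measurable G2" and gb: "\<And>x. x \<in> space M \<Longrightarrow> \<bar>g x\<bar> \<le> b"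
    and al: "\<And>A B. A \<in> sets G1 \<Longrightarrow> B \<in> sets G2 \<Longrightarrow>
               \<bar>measure M (A \<inter> B) - measure M A * measure M B\<bar> \<le> \<alpha>"
  shows "\<bar>(\<integral>x. f x * g x \<partial>M) - (\<integral>x. f x \<partial>M) * (\<integral>x. g x \<partial>M)\<bar> \<le> 4 * a * b * \<alpha>"
proof -
  obtain x0 where x0: "x0 \<in> space M" using not_empty by blast
  have a0: "0 \<le> a" using fb[OF x0] by linarith
  have b0: "0 \<le> b" using gb[OF x0] by linarith
  have gM: "g \<in> borel_measurable M" by (rule measurable_from_subalg[OF s2 gG])
  obtain u where uG: "u \<in> borel_measurable G1" and c1:
    "\<bar>(\<integral>x. f x * g x \<partial>M) - (\<integral>x. f x \<partial>M) * (\<integral>x. g x \<partial>M)\<bar>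
       \<le> a * ((\<integral>x. sgn (u x) * g x \<partial>M) - (\<integral>x. sgn (u x) \<partial>M) * (\<integral>x. g x \<partial>M))"
    using covariance_le_sign_covariance[OF s1 fG fb gM gb] by blast
  have sM: "(\<lambda>x. sgn (u x)) \<in> borel_measurable M"
    using measurable_from_subalg[OF s1 uG] by measurable
  obtain v where vG: "v \<in> borel_measurable G2" and c2:
    "\<bar>(\<integral>x. g x * sgn (u x) \<partial>M) - (\<integral>x. g x \<partial>M) * (\<integral>x. sgn (u x) \<partial>M)\<bar>
       \<le> b * ((\<integral>x. sgn (v x) * sgn (u x) \<partial>M) - (\<integral>x. sgn (v x) \<partial>M) * (\<integral>x. sgn (u x) \<partial>M))"
    using covariance_le_sign_covariance[OF s2 gG gb sM, where b=1] by (auto simp: abs_sgn_eq)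
  have c3: "\<bar>(\<integral>x. sgn (v x) * sgn (u x) \<partial>M) - (\<integral>x. sgn (v x) \<partial>M) * (\<integral>x. sgn (u x) \<partial>M)\<bar> \<le> 4 * \<alpha>"
    by (rule sign_covariance_le_alpha[OF s2 s1 vG uG]) (metis al Int_commute mult.commute)
  have "(\<integral>x. sgn (u x) * g x \<partial>M) - (\<integral>x. sgn (u x) \<partial>M) * (\<integral>x. g x \<partial>M) \<le> b * (4 * \<alpha>)"
    using c2 c3 b0 by (simp add: mult.commute) (smt (verit) mult_left_mono)
  then have "a * ((\<integral>x. sgn (u x) * g x \<partial>M) - (\<integral>x. sgn (u x) \<partial>M) * (\<integral>x. g x \<partial>M)) \<le> a * (b * (4 * \<alpha>))"
    using a0 by (rule mult_left_mono)
  with c1 show ?thesis by (simp add: algebra_simps)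
qed

end

lemma (in sigma_finite_subalgebra) real_cond_exp_abs_integral_le:
  assumes f: "integrable M f"
  shows "(\<integral>x. \<bar>real_cond_exp M F f x\<bar> \<partial>M) \<le> (\<integral>x. \<bar>f x\<bar> \<partial>M)"
proof -
  let ?u = "real_cond_exp M F f"
  have fM: "f \<in> borel_measurable M" using f by auto
  have uM: "?u \<in> borel_measurable M" by (rule measurable_from_subalg[OF subalg]) simp
  have sF: "(\<lambda>x. sgn (?u x)) \<in> borel_measurable F" by measurable
  have i1: "integrable M (\<lambda>x. sgn (?u x) * f x)"
    by (rule Bochner_Integration.integrable_bound[OF f]) (use uM fM in measurable, auto simp: abs_mult abs_sgn_eq)
  have "(\<integral>x. \<bar>?u x\<bar> \<partial>M) = (\<integral>x. sgn (?u x) * ?u x \<partial>M)"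
    by (simp add: abs_sgn mult.commute)
  also have "\<dots> = (\<integral>x. sgn (?u x) * f x \<partial>M)"
    by (rule real_cond_exp_intg(2)[OF i1 sF fM])
  also have "\<dots> \<le> (\<integral>x. \<bar>f x\<bar> \<partial>M)"
    by (rule integral_mono[OF i1]) (use f in \<open>auto simp: sgn_if\<close>)
  finally show ?thesis .
qed

section \<open>Geometric sums of pair weights\<close>

definition nat_dist :: "nat \<Rightarrow> nat \<Rightarrow> nat" where "nat_dist u v = (u - v) + (v - u)"

lemma nat_dist_sym: "nat_dist u v = nat_dist v u" unfolding nat_dist_def by simp

lemma geometric_sum_le:
  fixes \<rho> :: real
  assumes r: "0 \<le> \<rho>" "\<rho> < 1" and f: "finite S"
  shows "(\<Sum>d\<in>S. \<rho> ^ d) \<le> 1 / (1 - \<rho>)"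
proof -
  have "(\<Sum>d\<in>S. \<rho> ^ d) \<le> (\<Sum>d. \<rho> ^ d)"
    by (rule sum_le_suminf[OF summable_geometric f]) (use r in auto)
  also have "\<dots> = 1 / (1 - \<rho>)" using suminf_geometric[of \<rho>] r by simp
  finally show ?thesis .
qed

text \<open>Over distinct points the weights \<open>\<rho>^|x - m|\<close> sum to at most two geometric series.\<close>
lemma geometric_dist_sum_le:
  fixes \<rho> :: real
  assumes r: "0 \<le> \<rho>" "\<rho> < 1" and f: "finite S"
  shows "(\<Sum>m\<in>S. \<rho> ^ nat_dist x m) \<le> 2 / (1 - \<rho>)"
proof -
  define S1 where "S1 = S \<inter> {m. x \<le> m}"
  define S2 where "S2 = S - {m. x \<le> m}"
  have f1: "finite S1" "finite S2" using f by (auto simp: S1_def S2_def)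
  have "(\<Sum>m\<in>S. \<rho> ^ nat_dist x m) = (\<Sum>m\<in>S1. \<rho> ^ nat_dist x m) + (\<Sum>m\<in>S2. \<rho> ^ nat_dist x m)"
    unfolding S1_def S2_def using f by (rule sum.Int_Diff)
  also have "(\<Sum>m\<in>S1. \<rho> ^ nat_dist x m) = (\<Sum>d\<in>(\<lambda>m. m - x) ` S1. \<rho> ^ d)"
    by (subst sum.reindex) (auto simp: inj_on_def S1_def nat_dist_def intro!: sum.cong)
  also have "(\<Sum>m\<in>S2. \<rho> ^ nat_dist x m) = (\<Sum>d\<in>(\<lambda>m. x - m) ` S2. \<rho> ^ d)"
    by (subst sum.reindex) (auto simp: inj_on_def S2_def nat_dist_def intro!: sum.cong)
  finally show ?thesis
    using geometric_sum_le[OF r finite_imageI[OF f1(1)], of "\<lambda>m. m - x"]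
          geometric_sum_le[OF r finite_imageI[OF f1(2)], of "\<lambda>m. x - m"] by simp
qed

lemma decay_sum_injective:
  fixes t :: "nat \<Rightarrow> nat" and \<rho> :: real
  assumes r: "0 \<le> \<rho>" "\<rho> < 1" and inj: "inj_on t {N..}" and A: "finite A"
  shows "(\<Sum>k\<in>A. \<rho> ^ nat_dist x (t k)) \<le> real N + 2 / (1 - \<rho>)"
proof -
  have "(\<Sum>k\<in>A. \<rho> ^ nat_dist x (t k))
      = (\<Sum>k\<in>A \<inter> {..<N}. \<rho> ^ nat_dist x (t k)) + (\<Sum>k\<in>A - {..<N}. \<rho> ^ nat_dist x (t k))"
    by (rule sum.Int_Diff[OF A])
  also have "(\<Sum>k\<in>A \<inter> {..<N}. \<rho> ^ nat_dist x (t k)) \<le> real (card (A \<inter> {..<N}))"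
    using sum_bounded_above[of "A \<inter> {..<N}" "\<lambda>k. \<rho> ^ nat_dist x (t k)" 1] r
    by (simp add: power_le_one)
  also have "\<dots> \<le> real N" using card_mono[of "{..<N}" "A \<inter> {..<N}"] by simp
  also have "(\<Sum>k\<in>A - {..<N}. \<rho> ^ nat_dist x (t k)) = (\<Sum>m\<in>t ` (A - {..<N}). \<rho> ^ nat_dist x m)"
    by (rule sum.reindex[symmetric, unfolded comp_def]) (rule inj_on_subset[OF inj], auto)
  also have "\<dots> \<le> 2 / (1 - \<rho>)" by (rule geometric_dist_sum_le[OF r]) (use A in auto)
  finally show ?thesis by simp
qed

lemma decay_sum_separated:
  fixes t t' :: "nat \<Rightarrow> nat" and \<rho> :: real
  assumes r: "0 \<le> \<rho>" "\<rho> < 1" and sep: "\<And>k. K \<le> k \<Longrightarrow> k \<le> nat_dist (t k) (t' k)" and A: "finite A"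
  shows "(\<Sum>k\<in>A. \<rho> ^ nat_dist (t k) (t' k)) \<le> real K + 1 / (1 - \<rho>)"
proof -
  have "(\<Sum>k\<in>A. \<rho> ^ nat_dist (t k) (t' k))
      = (\<Sum>k\<in>A \<inter> {..<K}. \<rho> ^ nat_dist (t k) (t' k)) + (\<Sum>k\<in>A - {..<K}. \<rho> ^ nat_dist (t k) (t' k))"
    by (rule sum.Int_Diff[OF A])
  also have "(\<Sum>k\<in>A \<inter> {..<K}. \<rho> ^ nat_dist (t k) (t' k)) \<le> real (card (A \<inter> {..<K}))"
    using sum_bounded_above[of "A \<inter> {..<K}" "\<lambda>k. \<rho> ^ nat_dist (t k) (t' k)" 1] r
    by (simp add: power_le_one)
  also have "\<dots> \<le> real K" using card_mono[of "{..<K}" "A \<inter> {..<K}"] by simp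
  also have "(\<Sum>k\<in>A - {..<K}. \<rho> ^ nat_dist (t k) (t' k)) \<le> (\<Sum>k\<in>A - {..<K}. \<rho> ^ k)"
    by (rule sum_mono) (use r sep in \<open>auto intro: power_decreasing\<close>)
  also have "\<dots> \<le> 1 / (1 - \<rho>)" by (rule geometric_sum_le[OF r]) (use A in auto)
  finally show ?thesis by simp
qed

lemma exists_max_time:
  fixes t :: "'b \<Rightarrow> nat"
  assumes "finite I" "I \<noteq> {}"
  obtains i0 where "i0 \<in> I" "\<And>i. i \<in> I \<Longrightarrow> t i \<le> t i0"
proof -
  have "Max (t ` I) \<in> t ` I" using assms by (intro Max_in) auto
  then obtain i0 where "i0 \<in> I" "t i0 = Max (t ` I)" by (metis imageE)
  then show ?thesis using that assms by simp
qed

text \<open>It bounds the deviation of the expectation of a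
  product from the product of expectations.\<close>
definition pair_weight :: "real \<Rightarrow> ('b \<Rightarrow> nat) \<Rightarrow> 'b set \<Rightarrow> real" where
  "pair_weight \<rho> t I = (\<Sum>i\<in>I. \<Sum>i'\<in>I - {i}. \<rho> ^ nat_dist (t i) (t i'))"

lemma pair_weight_nonneg: "0 \<le> \<rho> \<Longrightarrow> 0 \<le> pair_weight \<rho> t I"
  unfolding pair_weight_def by (intro sum_nonneg) auto

lemma pair_weight_remove:
  assumes "finite I" "i0 \<in> I" "i1 \<in> I" "i1 \<noteq> i0" "0 \<le> \<rho>"
  shows "pair_weight \<rho> t (I - {i0}) + \<rho> ^ nat_dist (t i0) (t i1) \<le> pair_weight \<rho> t I"
proof -
  let ?w = "\<lambda>i i'. \<rho> ^ nat_dist (t i) (t i')"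
  have "pair_weight \<rho> t I = (\<Sum>i'\<in>I - {i0}. ?w i0 i') + (\<Sum>i\<in>I - {i0}. \<Sum>i'\<in>I - {i}. ?w i i')"
    unfolding pair_weight_def using assms by (simp add: sum.remove)
  moreover have "?w i0 i1 \<le> (\<Sum>i'\<in>I - {i0}. ?w i0 i')"
    by (rule member_le_sum) (use assms in auto)
  moreover have "pair_weight \<rho> t (I - {i0}) \<le> (\<Sum>i\<in>I - {i0}. \<Sum>i'\<in>I - {i}. ?w i i')"
    unfolding pair_weight_def by (intro sum_mono sum_mono2) (use assms in auto)
  ultimately show ?thesis by linarith
qed

lemma sum_off_diagonal_le:
  fixes f :: "'b \<Rightarrow> 'b \<Rightarrow> real"
  assumes "finite I" "0 \<le> B" "\<And>i i'. i \<in> I \<Longrightarrow> i' \<in> I \<Longrightarrow> i \<noteq> i' \<Longrightarrow> f i i' \<le> B"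
  shows "(\<Sum>i\<in>I. \<Sum>i'\<in>I - {i}. f i i') \<le> real (card I) * real (card I) * B"
proof -
  have "(\<Sum>i\<in>I. \<Sum>i'\<in>I - {i}. f i i') \<le> (\<Sum>i\<in>I. real (card I) * B)"
  proof (rule sum_mono)
    fix i assume i: "i \<in> I"
    have "(\<Sum>i'\<in>I - {i}. f i i') \<le> real (card (I - {i})) * B"
      by (rule sum_bounded_above) (use assms i in auto)
    also have "\<dots> \<le> real (card I) * B"
      by (rule mult_right_mono) (use assms card_mono[of I "I - {i}"] in auto)
    finally show "(\<Sum>i'\<in>I - {i}. f i i') \<le> real (card I) * B" .
  qed
  then show ?thesis by simp
qed

lemma sum_pair_weight_single:
  fixes q :: "nat \<Rightarrow> nat \<Rightarrow> nat" and \<rho> :: real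
  assumes B2: "\<And>j j'. j \<le> L \<Longrightarrow> j' \<le> L \<Longrightarrow> j \<noteq> j' \<Longrightarrow> (\<Sum>k\<in>S. \<rho> ^ nat_dist (q j k) (q j' k)) \<le> B2"
    and B2nn: "0 \<le> B2"
  shows "(\<Sum>k\<in>S. pair_weight \<rho> (\<lambda>j. q j k) {0..L}) \<le> real (L + 1) * real (L + 1) * B2"
proof -
  have "(\<Sum>k\<in>S. pair_weight \<rho> (\<lambda>j. q j k) {0..L})
      = (\<Sum>j\<in>{0..L}. \<Sum>j'\<in>{0..L} - {j}. \<Sum>k\<in>S. \<rho> ^ nat_dist (q j k) (q j' k))"
    unfolding pair_weight_def by (subst sum.swap) (rule sum.cong[OF refl], rule sum.swap)
  also have "\<dots> \<le> real (card {0..L}) * real (card {0..L}) * B2"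
    by (rule sum_off_diagonal_le) (use B2 B2nn in auto)
  finally show ?thesis by simp
qed

text \<open>The times of the product \<open>R(k) R(k')\<close>: index \<open>(j, False)\<close> is \<open>q j k\<close> and \<open>(j, True)\<close>
  is \<open>q j k'\<close>.\<close>
definition doubled_times :: "(nat \<Rightarrow> nat \<Rightarrow> nat) \<Rightarrow> nat \<Rightarrow> nat \<Rightarrow> nat \<times> bool \<Rightarrow> nat" where
  "doubled_times q k k' = (\<lambda>(j, b). q j (if b then k' else k))"

text \<open>For two distinct indices of the doubled family, the double sum over \<open>k, k' \<in> S\<close> of the
  pair term is at most \<open>card S (B1 + B2)\<close>: if both refer to the same \<open>k\<close> this is a separated
  sum, otherwise a sum with one time fixed.\<close>
lemma double_sum_pair_term_le:
  fixes q :: "nat \<Rightarrow> nat \<Rightarrow> nat" and \<rho> :: real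
  assumes B1: "\<And>j x. j \<le> L \<Longrightarrow> (\<Sum>k\<in>S. \<rho> ^ nat_dist x (q j k)) \<le> B1"
    and B2: "\<And>j j'. j \<le> L \<Longrightarrow> j' \<le> L \<Longrightarrow> j \<noteq> j' \<Longrightarrow> (\<Sum>k\<in>S. \<rho> ^ nat_dist (q j k) (q j' k)) \<le> B2"
    and B1nn: "0 \<le> B1" and B2nn: "0 \<le> B2"
    and j: "j \<le> L" "j' \<le> L" and ne: "(j, b) \<noteq> (j', b')"
  shows "(\<Sum>k\<in>S. \<Sum>k'\<in>S. \<rho> ^ nat_dist (doubled_times q k k' (j, b)) (doubled_times q k k' (j', b')))
           \<le> real (card S) * (B1 + B2)"
proof (cases "b = b'")
  case True
  then have jj: "j \<noteq> j'" using ne by auto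
  have "(\<Sum>k\<in>S. \<Sum>k'\<in>S. \<rho> ^ nat_dist (doubled_times q k k' (j, b)) (doubled_times q k k' (j', b')))
      = real (card S) * (\<Sum>k\<in>S. \<rho> ^ nat_dist (q j k) (q j' k))"
    using True by (cases b') (simp_all add: doubled_times_def sum_distrib_left)
  also have "\<dots> \<le> real (card S) * (B1 + B2)"
    by (rule mult_left_mono) (use B2[OF j jj] B1nn in auto)
  finally show ?thesis .
next
  case False
  have "(\<Sum>k\<in>S. \<Sum>k'\<in>S. \<rho> ^ nat_dist (doubled_times q k k' (j, b)) (doubled_times q k k' (j', b')))
      \<le> (\<Sum>k\<in>S. B1)"
  proof (rule sum_mono)
    fix k
    show "(\<Sum>k'\<in>S. \<rho> ^ nat_dist (doubled_times q k k' (j, b)) (doubled_times q k k' (j', b'))) \<le> B1"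
      using False B1[OF j(1), of "q j' k"] B1[OF j(2), of "q j k"]
      by (cases b') (simp_all add: doubled_times_def nat_dist_sym)
  qed
  also have "\<dots> \<le> real (card S) * (B1 + B2)" using B2nn by (simp add: mult_left_mono)
  finally show ?thesis .
qed

lemma sum_pair_weight_double:
  fixes q :: "nat \<Rightarrow> nat \<Rightarrow> nat" and \<rho> :: real
  assumes B1: "\<And>j x. j \<le> L \<Longrightarrow> (\<Sum>k\<in>S. \<rho> ^ nat_dist x (q j k)) \<le> B1"
    and B2: "\<And>j j'. j \<le> L \<Longrightarrow> j' \<le> L \<Longrightarrow> j \<noteq> j' \<Longrightarrow> (\<Sum>k\<in>S. \<rho> ^ nat_dist (q j k) (q j' k)) \<le> B2"
    and B1nn: "0 \<le> B1" and B2nn: "0 \<le> B2"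
  shows "(\<Sum>k\<in>S. \<Sum>k'\<in>S. pair_weight \<rho> (doubled_times q k k') ({0..L} \<times> UNIV))
     \<le> real (2 * L + 2) * real (2 * L + 2) * (real (card S) * (B1 + B2))"
proof -
  let ?I = "{0..L} \<times> (UNIV :: bool set)"
  have "(\<Sum>k\<in>S. \<Sum>k'\<in>S. pair_weight \<rho> (doubled_times q k k') ?I)
      = (\<Sum>i\<in>?I. \<Sum>i'\<in>?I - {i}. \<Sum>k\<in>S. \<Sum>k'\<in>S. \<rho> ^ nat_dist (doubled_times q k k' i) (doubled_times q k k' i'))"
    unfolding pair_weight_def
  proof -
    let ?t = "\<lambda>k k' i i'. \<rho> ^ nat_dist (doubled_times q k k' i) (doubled_times q k k' i')"
    have "(\<Sum>k\<in>S. \<Sum>k'\<in>S. \<Sum>i\<in>?I. \<Sum>i'\<in>?I - {i}. ?t k k' i i')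
        = (\<Sum>k\<in>S. \<Sum>i\<in>?I. \<Sum>k'\<in>S. \<Sum>i'\<in>?I - {i}. ?t k k' i i')"
      by (rule sum.cong[OF refl], rule sum.swap)
    also have "\<dots> = (\<Sum>i\<in>?I. \<Sum>k\<in>S. \<Sum>i'\<in>?I - {i}. \<Sum>k'\<in>S. ?t k k' i i')"
      by (subst sum.swap) (rule sum.cong[OF refl], rule sum.cong[OF refl], rule sum.swap)
    also have "\<dots> = (\<Sum>i\<in>?I. \<Sum>i'\<in>?I - {i}. \<Sum>k\<in>S. \<Sum>k'\<in>S. ?t k k' i i')"
      by (rule sum.cong[OF refl], rule sum.swap)
    finally show "(\<Sum>k\<in>S. \<Sum>k'\<in>S. \<Sum>i\<in>?I. \<Sum>i'\<in>?I - {i}. ?t k k' i i') = \<dots>" .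
  qed
  also have "\<dots> \<le> real (card ?I) * real (card ?I) * (real (card S) * (B1 + B2))"
  proof (rule sum_off_diagonal_le)
    fix i i' assume "i \<in> ?I" "i' \<in> ?I" "i \<noteq> i'"
    then show "(\<Sum>k\<in>S. \<Sum>k'\<in>S. \<rho> ^ nat_dist (doubled_times q k k' i) (doubled_times q k k' i'))
               \<le> real (card S) * (B1 + B2)"
      using double_sum_pair_term_le[OF B1 B2 B1nn B2nn] by (cases i, cases i') auto
  qed (use B1nn B2nn in auto)
  also have "card ?I = 2 * L + 2" by (simp add: card_cartesian_product)
  finally show ?thesis .
qed

section \<open>Admissible time sequences\<close>

locale admissible_times =
  fixes L :: nat and q :: "nat \<Rightarrow> nat \<Rightarrow> nat" and r p n0 :: nat and \<gamma> :: real
  assumes q0: "\<And>n. q 0 n = n"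
    and r: "r \<ge> 2"
    and q1: "\<And>n. q 1 n = r * n + p"
    and gamma: "0 < \<gamma>" "\<gamma> < 1"
    and n0: "n0 > 1"
    and q_growth: "\<And>j n. 2 \<le> j \<Longrightarrow> j \<le> L \<Longrightarrow> n \<ge> n0 \<Longrightarrow>
                     real (q j (n + 1)) \<ge> real (q j n) + real n powr \<gamma>"
    and q_nest: "\<And>j n. 1 \<le> j \<Longrightarrow> j \<le> L - 1 \<Longrightarrow> n \<ge> n0 \<Longrightarrow>
                     real (q (j + 1) (nat \<lfloor>real n powr (1 - \<gamma>)\<rfloor>)) \<ge> real (q j n) * real n powr \<gamma>"
begin

lemma q_tail_increase:
  assumes j: "2 \<le> j" "j \<le> L" and n: "n0 \<le> n"
  shows "q j n + d \<le> q j (n + d)"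
proof (induction d)
  case 0 then show ?case by simp
next
  case (Suc d)
  have "0 < real (n + d) powr \<gamma>" using n n0 by simp
  then have "real (q j (n + d)) < real (q j (n + d + 1))"
    using q_growth[OF j, of "n + d"] n by linarith
  then show ?case using Suc by simp
qed

lemma q_inj_tail:
  assumes j: "j \<le> L"
  shows "inj_on (q j) {n0..}"
proof (cases "j \<le> 1")
  case True
  then consider "j = 0" | "j = 1" by linarith
  then show ?thesis
  proof cases
    case 2 then show ?thesis using r by (auto simp: inj_on_def q1[simplified])
  qed (auto simp: inj_on_def q0)
next
  case False
  then have j2: "2 \<le> j" by simp
  have less: "q j k < q j k'" if "n0 \<le> k" "k < k'" for k k'
    using q_tail_increase[OF j2 j that(1), of "k' - k"] that by simp
  show ?thesis
    by (rule inj_onI) (metis atLeast_iff less less_irrefl linorder_cases)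
qed

lemma large_indices:
  "\<exists>K. \<forall>k\<ge>K. n0 \<le> k \<and> 3/2 \<le> real k powr \<gamma> \<and> real n0 \<le> real k powr (1 - \<gamma>)"
proof -
  have powr_large: "eventually (\<lambda>k::nat. c \<le> real k powr a) sequentially" if "0 < a" for a c
    using filterlim_compose[OF real_powr_at_top[OF that] filterlim_real_sequentially]
    by (simp add: filterlim_at_top)
  have "eventually (\<lambda>k::nat. n0 \<le> k \<and> 3/2 \<le> real k powr \<gamma> \<and> real n0 \<le> real k powr (1 - \<gamma>)) sequentially"
    by (intro eventually_conj eventually_ge_at_top powr_large) (use gamma in auto)
  then show ?thesis by (simp add: eventually_sequentially)
qed

lemma q_nest_gap:
  assumes kn0: "n0 \<le> k" and kg: "3/2 \<le> real k powr \<gamma>" and kg2: "real n0 \<le> real k powr (1 - \<gamma>)"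
    and j: "1 \<le> j" "j < L" and qj: "2 * k \<le> q j k"
  shows "q j k + k \<le> q (j + 1) k"
proof -
  define m where "m = nat \<lfloor>real k powr (1 - \<gamma>)\<rfloor>"
  have k1: "1 \<le> real k" using kn0 n0 by simp
  have mn0: "n0 \<le> m" unfolding m_def using kg2 by (simp add: le_nat_floor)
  have "real k powr (1 - \<gamma>) \<le> real k powr 1" by (rule powr_mono) (use gamma k1 in auto)
  then have "\<lfloor>real k powr (1 - \<gamma>)\<rfloor> \<le> \<lfloor>real k\<rfloor>" using k1 by (intro floor_mono) simp
  then have mk: "m \<le> k" unfolding m_def by simp
  have "q (j + 1) m + (k - m) \<le> q (j + 1) (m + (k - m))"
    by (rule q_tail_increase[OF _ _ mn0]) (use j in auto)
  then have qm: "q (j + 1) m \<le> q (j + 1) k" using mk by simp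
  have nest: "real (q j k) * real k powr \<gamma> \<le> real (q (j + 1) m)"
    unfolding m_def by (rule q_nest) (use j kn0 in auto)
  have "real (2 * k) * (1/2) \<le> real (q j k) * (real k powr \<gamma> - 1)"
    by (rule mult_mono) (use qj kg in auto)
  then have "real (q j k) + real k \<le> real (q j k) * real k powr \<gamma>" by (simp add: algebra_simps)
  then have "real (q j k + k) \<le> real (q (j + 1) k)" using nest qm by simp
  then show ?thesis by linarith
qed

text \<open>By induction on \<open>j\<close>, starting from \<open>q_1 k = r k + p \<ge> 2 k\<close>.\<close>
lemma q_consecutive_gap:
  "\<exists>K. \<forall>k\<ge>K. \<forall>j<L. q j k + k \<le> q (j + 1) k"
proof -
  obtain K where K: "\<And>k. K \<le> k \<Longrightarrow> n0 \<le> k \<and> 3/2 \<le> real k powr \<gamma> \<and> real n0 \<le> real k powr (1 - \<gamma>)"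
    using large_indices by blast
  have "q j k + k \<le> q (j + 1) k \<and> 2 * k \<le> q (j + 1) k" if k: "K \<le> k" and j: "j < L" for j k
    using j
  proof (induction j)
    case 0
    have "2 * k \<le> r * k" by (rule mult_le_mono1[OF r])
    then have "2 * k \<le> q 1 k" using q1[of k] by linarith
    then show ?case using q0[of k] by simp
  next
    case (Suc j)
    then have "2 * k \<le> q (Suc j) k" by simp
    then have "q (Suc j) k + k \<le> q (Suc j + 1) k"
      using q_nest_gap[of k "Suc j"] K[OF k] Suc.prems by simp
    then show ?case using \<open>2 * k \<le> q (Suc j) k\<close> by simp
  qed
  then show ?thesis by blast
qed

lemma q_separated:
  "\<exists>K. \<forall>k\<ge>K. \<forall>i i'. i \<le> L \<longrightarrow> i' \<le> L \<longrightarrow> i \<noteq> i' \<longrightarrow> k \<le> nat_dist (q i k) (q i' k)"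
proof -
  obtain K where K: "\<And>k j. K \<le> k \<Longrightarrow> j < L \<Longrightarrow> q j k + k \<le> q (j + 1) k"
    using q_consecutive_gap by blast
  have ordered: "q i k + k \<le> q i' k" if k: "K \<le> k" and "i < i'" "i' \<le> L" for i i' k
    using that(2,3)
  proof (induction i')
    case (Suc i')
    show ?case
    proof (cases "i = i'")
      case False
      then have "q i k + k \<le> q i' k" using Suc by simp
      then show ?thesis using K[OF k, of i'] Suc.prems by simp
    qed (use K[OF k, of i] Suc.prems in simp)
  qed simp
  have "k \<le> nat_dist (q i k) (q i' k)" if "K \<le> k" "i \<le> L" "i' \<le> L" "i \<noteq> i'" for i i' k
    using ordered[of k i i'] ordered[of k i' i] that by (cases "i < i'") (auto simp: nat_dist_def)
  then show ?thesis by blast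
qed

lemma decay_sums_bounded:
  fixes \<rho> :: real
  assumes r: "0 \<le> \<rho>" "\<rho> < 1"
  shows "\<exists>B1 B2. 0 \<le> B1 \<and> 0 \<le> B2
    \<and> (\<forall>j x A. j \<le> L \<longrightarrow> finite A \<longrightarrow> (\<Sum>k\<in>A. \<rho> ^ nat_dist x (q j k)) \<le> B1)
    \<and> (\<forall>j j' A. j \<le> L \<longrightarrow> j' \<le> L \<longrightarrow> j \<noteq> j' \<longrightarrow> finite A \<longrightarrow> (\<Sum>k\<in>A. \<rho> ^ nat_dist (q j k) (q j' k)) \<le> B2)"
proof -
  obtain K where K: "\<forall>k\<ge>K. \<forall>i i'. i \<le> L \<longrightarrow> i' \<le> L \<longrightarrow> i \<noteq> i' \<longrightarrow> k \<le> nat_dist (q i k) (q i' k)"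
    using q_separated by blast
  show ?thesis
  proof (intro exI conjI allI impI)
    show "0 \<le> real n0 + 2 / (1 - \<rho>)" "0 \<le> real K + 1 / (1 - \<rho>)" using r by simp_all
    show "(\<Sum>k\<in>A. \<rho> ^ nat_dist x (q j k)) \<le> real n0 + 2 / (1 - \<rho>)" if "j \<le> L" "finite A" for j x A
      by (rule decay_sum_injective[OF r q_inj_tail[OF that(1)] that(2)])
    show "(\<Sum>k\<in>A. \<rho> ^ nat_dist (q j k) (q j' k)) \<le> real K + 1 / (1 - \<rho>)"
      if "j \<le> L" "j' \<le> L" "j \<noteq> j'" "finite A" for j j' A
      by (rule decay_sum_separated[OF r _ that(4)]) (use K that in auto)
  qed
qed

end

section \<open>The mixing setting\<close>

lemma ext_int_of_int [simp]: "ereal (real_of_int i) \<in> ext_int_idx"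
  unfolding ext_int_idx_def by blast

lemma ext_int_nat [simp]: "ereal (real n) \<in> ext_int_idx"
  using ext_int_of_int[of "int n"] by simp

lemma ext_int_diff [simp]: "ereal (real m - real h) \<in> ext_int_idx"
  using ext_int_of_int[of "int m - int h"] by simp

lemma ext_int_add [simp]: "ereal (real m + real h) \<in> ext_int_idx"
  using ext_int_of_int[of "int m + int h"] by simp

lemma ext_int_infinity [simp]: "\<infinity> \<in> ext_int_idx" "-\<infinity> \<in> ext_int_idx"
  unfolding ext_int_idx_def by auto

text \<open>The probabilistic hypotheses of the theorem, with the bound \<open>D\<close> normalised to \<open>D \<ge> 1\<close>.\<close>
locale mixing_setting = prob_space M for M :: "'a measure" +
  fixes L :: nat and X :: "nat \<Rightarrow> nat \<Rightarrow> 'a \<Rightarrow> real" and D :: real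
    and F :: "ereal \<Rightarrow> ereal \<Rightarrow> 'a measure" and \<kappa> :: real
  assumes X_meas: "\<And>j n. j \<le> L \<Longrightarrow> X j n \<in> borel_measurable M"
    and X_stat: "\<And>j. j \<le> L \<Longrightarrow> stationary_proc M (X j)"
    and X_bdd: "\<And>j n. j \<le> L \<Longrightarrow> AE \<omega> in M. \<bar>X j n \<omega>\<bar> \<le> D"
    and D1: "1 \<le> D"
    and F_sub: "\<And>k l. k \<in> ext_int_idx \<Longrightarrow> l \<in> ext_int_idx \<Longrightarrow> subalgebra M (F k l)"
    and F_mono: "\<And>k l k' l'. k \<in> ext_int_idx \<Longrightarrow> l \<in> ext_int_idx \<Longrightarrow> k' \<in> ext_int_idx \<Longrightarrow>
                   l' \<in> ext_int_idx \<Longrightarrow> k' \<le> k \<Longrightarrow> l \<le> l' \<Longrightarrow> sets (F k l) \<subseteq> sets (F k' l')"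
    and kappa: "\<kappa> > 0"
    and mixing: "\<And>n. alpha_mix M F n + Max ((\<lambda>j. beta_mix M F (X j) n) ` {0..L})
                        \<le> exp (- \<kappa> * real n) / \<kappa>"
begin

lemma D_nonneg: "0 \<le> D" using D1 by simp

lemma F_space: "k \<in> ext_int_idx \<Longrightarrow> l \<in> ext_int_idx \<Longrightarrow> space (F k l) = space M"
  using F_sub by (auto simp: subalgebra_def)

lemma F_measurable_mono:
  assumes "f \<in> borel_measurable (F k l)" "k \<in> ext_int_idx" "l \<in> ext_int_idx" "k' \<in> ext_int_idx"
    "l' \<in> ext_int_idx" "k' \<le> k" "l \<le> l'"
  shows "f \<in> borel_measurable (F k' l')"
proof (rule measurable_from_subalg[OF _ assms(1)])
  show "subalgebra (F k' l') (F k l)"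
    unfolding subalgebra_def using F_mono F_space assms(2-) by auto
qed

lemma F_measurable_M: "f \<in> borel_measurable (F k l) \<Longrightarrow> k \<in> ext_int_idx \<Longrightarrow> l \<in> ext_int_idx \<Longrightarrow> f \<in> borel_measurable M"
  by (rule measurable_from_subalg[OF F_sub])

lemma F_sigma_finite: "k \<in> ext_int_idx \<Longrightarrow> l \<in> ext_int_idx \<Longrightarrow> sigma_finite_subalgebra M (F k l)"
  by (rule finite_measure_subalgebra_is_sigma_finite) (unfold_locales, rule F_sub)

definition mix_rate :: "nat \<Rightarrow> real" where "mix_rate n = exp (- \<kappa> * real n) / \<kappa>"

lemma mix_rate_nonneg: "0 \<le> mix_rate n"
  unfolding mix_rate_def using kappa by simp

lemma mix_rate_antimono: "m \<le> n \<Longrightarrow> mix_rate n \<le> mix_rate m"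
  unfolding mix_rate_def using kappa by (simp add: divide_right_mono)

lemma alpha_mix_upper:
  assumes "A \<in> sets (F (-\<infinity>) (ereal (real k)))" "B \<in> sets (F (ereal (real (k + n))) \<infinity>)"
  shows "\<bar>measure M (A \<inter> B) - measure M A * measure M B\<bar> \<le> alpha_mix M F n"
proof -
  have "bdd_above {\<bar>measure M (A \<inter> B) - measure M A * measure M B\<bar> | k A B.
       A \<in> sets (F (-\<infinity>) (ereal (real k))) \<and> B \<in> sets (F (ereal (real (k + n))) \<infinity>)}"
  proof (rule bdd_aboveI[where M=1], clarify)
    fix k A B
    have h: "0 \<le> measure M (A \<inter> B)" "measure M (A \<inter> B) \<le> 1" "0 \<le> measure M A" "measure M A \<le> 1"
      "0 \<le> measure M B" "measure M B \<le> 1" by auto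
    then have "measure M A * measure M B \<le> 1" "0 \<le> measure M A * measure M B"
      by (auto intro: mult_le_one)
    then show "\<bar>measure M (A \<inter> B) - measure M A * measure M B\<bar> \<le> 1"
      unfolding abs_le_iff using h by linarith
  qed
  then show ?thesis unfolding alpha_mix_def
    by (rule cSup_upper[rotated]) (use assms in blast)
qed

lemma alpha_mix_nonneg: "0 \<le> alpha_mix M F n"
  using alpha_mix_upper[of "{}" 0 "{}" n] by simp

lemma X_integrable: "j \<le> L \<Longrightarrow> integrable M (X j n)"
  by (rule integrable_const_bound[where B=D]) (use X_bdd X_meas in auto)

abbreviation cond_window :: "nat \<Rightarrow> nat \<Rightarrow> nat \<Rightarrow> 'a \<Rightarrow> real" where
  "cond_window j m h \<equiv> real_cond_exp M (F (ereal (real m - real h)) (ereal (real m + real h))) (X j m)"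

lemma cond_window_integrable: "j \<le> L \<Longrightarrow> integrable M (cond_window j m h)"
proof -
  assume j: "j \<le> L"
  interpret sigma_finite_subalgebra M "F (ereal (real m - real h)) (ereal (real m + real h))"
    by (rule F_sigma_finite) auto
  show ?thesis by (rule real_cond_exp_int(1)[OF X_integrable[OF j]])
qed

lemma beta_mix_upper:
  assumes j: "j \<le> L"
  shows "(\<integral>\<omega>. \<bar>X j m \<omega> - cond_window j m h \<omega>\<bar> \<partial>M) \<le> beta_mix M F (X j) h"
proof -
  have "bdd_above {(\<integral>\<omega>. \<bar>X j m \<omega> - cond_window j m h \<omega>\<bar> \<partial>M) | m. True}"
  proof (rule bdd_aboveI[where M="2*D"], clarify)
    fix m
    interpret sigma_finite_subalgebra M "F (ereal (real m - real h)) (ereal (real m + real h))"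
      by (rule F_sigma_finite) auto
    note i = cond_window_integrable[OF j, of m h] X_integrable[OF j, of m]
    have "(\<integral>\<omega>. \<bar>X j m \<omega> - cond_window j m h \<omega>\<bar> \<partial>M) \<le> (\<integral>\<omega>. \<bar>X j m \<omega>\<bar> + \<bar>cond_window j m h \<omega>\<bar> \<partial>M)"
      by (rule integral_mono) (use i in auto)
    also have "\<dots> = (\<integral>\<omega>. \<bar>X j m \<omega>\<bar> \<partial>M) + (\<integral>\<omega>. \<bar>cond_window j m h \<omega>\<bar> \<partial>M)"
      by (rule Bochner_Integration.integral_add) (use i in auto)
    also have "\<dots> \<le> D + D"
    proof (rule add_mono)
      show "(\<integral>\<omega>. \<bar>X j m \<omega>\<bar> \<partial>M) \<le> D"
        by (rule integral_le_const) (use i X_bdd[OF j] in auto)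
      then show "(\<integral>\<omega>. \<bar>cond_window j m h \<omega>\<bar> \<partial>M) \<le> D"
        using real_cond_exp_abs_integral_le[OF X_integrable[OF j, of m]] by linarith
    qed
    finally show "(\<integral>\<omega>. \<bar>X j m \<omega> - cond_window j m h \<omega>\<bar> \<partial>M) \<le> 2 * D" by simp
  qed
  then show ?thesis unfolding beta_mix_def by (rule cSup_upper[rotated]) blast
qed

lemma beta_mix_nonneg: "j \<le> L \<Longrightarrow> 0 \<le> beta_mix M F (X j) h"
  by (rule order_trans[OF _ beta_mix_upper[of j 0]]) auto

lemma beta_decay:
  assumes j: "j \<le> L"
  shows "(\<integral>\<omega>. \<bar>X j m \<omega> - cond_window j m h \<omega>\<bar> \<partial>M) \<le> mix_rate h"
proof -
  have "beta_mix M F (X j) h \<le> Max ((\<lambda>j. beta_mix M F (X j) h) ` {0..L})"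
    by (rule Max_ge) (use j in auto)
  then show ?thesis
    using beta_mix_upper[OF j, of m h] mixing[of h] alpha_mix_nonneg[of h] unfolding mix_rate_def by linarith
qed

lemma alpha_decay: "alpha_mix M F n \<le> mix_rate n"
proof -
  have "beta_mix M F (X 0) n \<le> Max ((\<lambda>j. beta_mix M F (X j) n) ` {0..L})"
    by (rule Max_ge) auto
  then show ?thesis using beta_mix_nonneg[of 0 n] mixing[of n] unfolding mix_rate_def by linarith
qed

lemma mix_rate_third:
  "mix_rate (g div 3) \<le> exp \<kappa> / \<kappa> * exp (- \<kappa> / 3) ^ g"
proof -
  have "exp (- \<kappa> / 3) ^ g = exp (real g * (- \<kappa> / 3))"
    using exp_of_nat_mult[of g "- \<kappa> / 3", symmetric] by simp
  then have e: "exp \<kappa> * exp (- \<kappa> / 3) ^ g = exp (\<kappa> + real g * (- \<kappa> / 3))"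
    by (simp add: exp_add[symmetric])
  have "real g \<le> 3 * real (g div 3) + 2" by linarith
  then have "\<kappa> * real g \<le> \<kappa> * (3 * real (g div 3) + 2)" using kappa by (intro mult_left_mono) auto
  then have "- \<kappa> * real (g div 3) \<le> \<kappa> + real g * (- \<kappa> / 3)" using kappa by (simp add: algebra_simps)
  then show ?thesis unfolding mix_rate_def using e kappa by (simp add: divide_right_mono)
qed

text \<open>Since \<open>X\<close> is bounded only almost surely, work with the clipped processes, which are
  bounded everywhere and agree with \<open>X\<close> almost surely.\<close>
definition clip :: "real \<Rightarrow> real" where "clip x = max (-D) (min D x)"
definition Xc :: "nat \<Rightarrow> nat \<Rightarrow> 'a \<Rightarrow> real" where "Xc j n \<omega> = clip (X j n \<omega>)"
definition Xloc :: "nat \<Rightarrow> nat \<Rightarrow> nat \<Rightarrow> 'a \<Rightarrow> real" where "Xloc j m h \<omega> = clip (cond_window j m h \<omega>)"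

lemma clip_abs: "\<bar>clip x\<bar> \<le> D" using D_nonneg by (simp add: clip_def)
lemma clip_lipschitz: "\<bar>clip x - clip y\<bar> \<le> \<bar>x - y\<bar>" by (simp add: clip_def)
lemma clip_id: "\<bar>x\<bar> \<le> D \<Longrightarrow> clip x = x" by (simp add: clip_def)
lemma clip_measurable[measurable]: "clip \<in> borel_measurable borel" unfolding clip_def by measurable

lemma Xc_measurable: "j \<le> L \<Longrightarrow> Xc j n \<in> borel_measurable M"
  unfolding Xc_def[abs_def] using X_meas[of j n] by measurable
lemma Xc_abs: "\<bar>Xc j n \<omega>\<bar> \<le> D" unfolding Xc_def by (rule clip_abs)
lemma Xloc_abs: "\<bar>Xloc j m h \<omega>\<bar> \<le> D" unfolding Xloc_def by (rule clip_abs)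

lemma Xloc_measurable_window:
  "Xloc j m h \<in> borel_measurable (F (ereal (real m - real h)) (ereal (real m + real h)))"
proof -
  interpret sigma_finite_subalgebra M "F (ereal (real m - real h)) (ereal (real m + real h))"
    by (rule F_sigma_finite) auto
  show ?thesis unfolding Xloc_def[abs_def] by measurable
qed

lemma Xloc_measurable: "Xloc j m h \<in> borel_measurable M"
  by (rule F_measurable_M[OF Xloc_measurable_window]) auto

lemma Xc_AE: "AE \<omega> in M. \<forall>j n. j \<le> L \<longrightarrow> X j n \<omega> = Xc j n \<omega>"
proof -
  have "AE \<omega> in M. j \<le> L \<longrightarrow> X j n \<omega> = Xc j n \<omega>" for j n
  proof (cases "j \<le> L")
    case True
    show ?thesis using X_bdd[OF True, of n] by eventually_elim (simp add: Xc_def clip_id)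
  qed simp
  then show ?thesis by (simp add: AE_all_countable)
qed

lemma Xc_Xloc_integrable: "j \<le> L \<Longrightarrow> integrable M (\<lambda>\<omega>. \<bar>Xc j m \<omega> - Xloc j' m' h \<omega>\<bar>)"
proof (rule integrable_bounded[OF finite_measure_axioms, where B="2*D"])
  assume "j \<le> L"
  then show "(\<lambda>\<omega>. \<bar>Xc j m \<omega> - Xloc j' m' h \<omega>\<bar>) \<in> borel_measurable M"
    using Xc_measurable Xloc_measurable by measurable
  show "\<bar>\<bar>Xc j m x - Xloc j' m' h x\<bar>\<bar> \<le> 2 * D" for x
    using Xc_abs[of j m x] Xloc_abs[of j' m' h x] by linarith
qed

text \<open>Clipping is 1-Lipschitz, so the local approximation inherits the \<open>\<beta>\<close>-rate.\<close>
lemma Xloc_error: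
  assumes j: "j \<le> L"
  shows "(\<integral>\<omega>. \<bar>Xc j m \<omega> - Xloc j m h \<omega>\<bar> \<partial>M) \<le> mix_rate h"
proof -
  have "(\<integral>\<omega>. \<bar>Xc j m \<omega> - Xloc j m h \<omega>\<bar> \<partial>M) \<le> (\<integral>\<omega>. \<bar>X j m \<omega> - cond_window j m h \<omega>\<bar> \<partial>M)"
  proof (rule integral_mono)
    show "integrable M (\<lambda>\<omega>. \<bar>Xc j m \<omega> - Xloc j m h \<omega>\<bar>)" by (rule Xc_Xloc_integrable[OF j])
    show "integrable M (\<lambda>\<omega>. \<bar>X j m \<omega> - cond_window j m h \<omega>\<bar>)"
      using cond_window_integrable[OF j] X_integrable[OF j] by auto
  qed (simp add: Xc_def Xloc_def clip_lipschitz)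
  also have "\<dots> \<le> mix_rate h" by (rule beta_decay[OF j])
  finally show ?thesis .
qed

lemma X_mean_stationary:
  assumes j: "j \<le> L"
  shows "(\<integral>\<omega>. X j m \<omega> \<partial>M) = (\<integral>\<omega>. X j 0 \<omega> \<partial>M)"
proof -
  let ?P = "PiM UNIV (\<lambda>_. borel) :: (nat \<Rightarrow> real) measure"
  have st: "distr M ?P (\<lambda>\<omega> n. X j (n + m) \<omega>) = distr M ?P (\<lambda>\<omega> n. X j n \<omega>)"
    using X_stat[OF j] unfolding stationary_proc_def by blast
  have m1: "(\<lambda>\<omega> n. X j (n + m) \<omega>) \<in> M \<rightarrow>\<^sub>M ?P"
    by (rule measurable_abs_UNIV) (rule X_meas[OF j])
  have m2: "(\<lambda>\<omega> n. X j n \<omega>) \<in> M \<rightarrow>\<^sub>M ?P"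
    by (rule measurable_abs_UNIV) (rule X_meas[OF j])
  have p: "(\<lambda>f. f 0) \<in> borel_measurable ?P" by measurable
  have "(\<integral>\<omega>. X j m \<omega> \<partial>M) = integral\<^sup>L (distr M ?P (\<lambda>\<omega> n. X j (n + m) \<omega>)) (\<lambda>f. f 0)"
    using integral_distr[OF m1 p] by simp
  also have "\<dots> = integral\<^sup>L (distr M ?P (\<lambda>\<omega> n. X j n \<omega>)) (\<lambda>f. f 0)"
    by (simp add: st)
  also have "\<dots> = (\<integral>\<omega>. X j 0 \<omega> \<partial>M)" using integral_distr[OF m2 p] by simp
  finally show ?thesis .
qed

lemma Xc_mean: "j \<le> L \<Longrightarrow> (\<integral>\<omega>. Xc j m \<omega> \<partial>M) = (\<integral>\<omega>. X j 0 \<omega> \<partial>M)"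
proof -
  assume j: "j \<le> L"
  have "(\<integral>\<omega>. Xc j m \<omega> \<partial>M) = (\<integral>\<omega>. X j m \<omega> \<partial>M)"
    by (rule integral_cong_AE) (use Xc_measurable[OF j] X_meas[OF j] Xc_AE j in auto)
  then show ?thesis using X_mean_stationary[OF j] by simp
qed

lemma Xc_prod_integrable:
  "(\<And>i. i \<in> J \<Longrightarrow> jj i \<le> L) \<Longrightarrow> integrable M (\<lambda>\<omega>. \<Prod>i\<in>J. Xc (jj i) (t i) \<omega>)"
  by (rule integrable_bounded[OF finite_measure_axioms _ abs_prod_le_power[OF Xc_abs]])
     (auto intro!: borel_measurable_prod Xc_measurable)

lemma Xloc_prod_integrable: "integrable M (\<lambda>\<omega>. \<Prod>i\<in>J. Xloc (jj i) (t i) h \<omega>)"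
  by (rule integrable_bounded[OF finite_measure_axioms _ abs_prod_le_power[OF Xloc_abs]])
     (auto intro!: borel_measurable_prod Xloc_measurable)

lemma Xloc_prod_error:
  fixes jj t :: "'b \<Rightarrow> nat"
  assumes J: "finite J" and jL: "\<And>i. i \<in> J \<Longrightarrow> jj i \<le> L"
  shows "\<bar>(\<integral>\<omega>. (\<Prod>i\<in>J. Xc (jj i) (t i) \<omega>) \<partial>M) - (\<integral>\<omega>. (\<Prod>i\<in>J. Xloc (jj i) (t i) h \<omega>) \<partial>M)\<bar>
         \<le> D ^ card J * (card J * mix_rate h)"
proof -
  let ?err = "\<lambda>i \<omega>. \<bar>Xc (jj i) (t i) \<omega> - Xloc (jj i) (t i) h \<omega>\<bar>"
  have err_int: "integrable M (?err i)" if "i \<in> J" for i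
    using Xc_Xloc_integrable jL that by blast
  note Zi = Xc_prod_integrable[OF jL, where t=t] and Vi = Xloc_prod_integrable[where J=J and jj=jj and t=t and h=h]
  have "\<bar>(\<integral>\<omega>. (\<Prod>i\<in>J. Xc (jj i) (t i) \<omega>) \<partial>M) - (\<integral>\<omega>. (\<Prod>i\<in>J. Xloc (jj i) (t i) h \<omega>) \<partial>M)\<bar>
      = \<bar>\<integral>\<omega>. (\<Prod>i\<in>J. Xc (jj i) (t i) \<omega>) - (\<Prod>i\<in>J. Xloc (jj i) (t i) h \<omega>) \<partial>M\<bar>"
    using Zi Vi by simp
  also have "\<dots> \<le> (\<integral>\<omega>. \<bar>(\<Prod>i\<in>J. Xc (jj i) (t i) \<omega>) - (\<Prod>i\<in>J. Xloc (jj i) (t i) h \<omega>)\<bar> \<partial>M)"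
    by (rule integral_abs_bound)
  also have "\<dots> \<le> (\<integral>\<omega>. D ^ card J * (\<Sum>i\<in>J. ?err i \<omega>) \<partial>M)"
  proof (rule integral_mono)
    show "integrable M (\<lambda>\<omega>. \<bar>(\<Prod>i\<in>J. Xc (jj i) (t i) \<omega>) - (\<Prod>i\<in>J. Xloc (jj i) (t i) h \<omega>)\<bar>)"
      using Zi Vi by auto
    show "integrable M (\<lambda>\<omega>. D ^ card J * (\<Sum>i\<in>J. ?err i \<omega>))"
      using err_int by auto
  qed (rule abs_prod_diff_le[OF J D1 Xc_abs Xloc_abs])
  also have "\<dots> = D ^ card J * (\<Sum>i\<in>J. (\<integral>\<omega>. ?err i \<omega> \<partial>M))"
    using err_int by (simp add: Bochner_Integration.integral_sum)
  also have "\<dots> \<le> D ^ card J * (\<Sum>i\<in>J. mix_rate h)"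
    by (intro mult_left_mono sum_mono Xloc_error) (use jL D_nonneg in auto)
  finally show ?thesis by simp
qed

lemma Xloc_prod_past:
  assumes "\<And>i. i \<in> J \<Longrightarrow> t i + h \<le> c"
  shows "(\<lambda>\<omega>. \<Prod>i\<in>J. Xloc (jj i) (t i) h \<omega>) \<in> borel_measurable (F (-\<infinity>) (ereal (real c)))"
proof (rule borel_measurable_prod)
  fix i assume i: "i \<in> J"
  show "Xloc (jj i) (t i) h \<in> borel_measurable (F (-\<infinity>) (ereal (real c)))"
    by (rule F_measurable_mono[OF Xloc_measurable_window]) (use assms[OF i] in auto)
qed

lemma Xloc_prod_future:
  assumes "\<And>i. i \<in> J \<Longrightarrow> c + h \<le> t i"
  shows "(\<lambda>\<omega>. \<Prod>i\<in>J. Xloc (jj i) (t i) h \<omega>) \<in> borel_measurable (F (ereal (real c)) \<infinity>)"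
proof (rule borel_measurable_prod)
  fix i assume i: "i \<in> J"
  show "Xloc (jj i) (t i) h \<in> borel_measurable (F (ereal (real c)) \<infinity>)"
    by (rule F_measurable_mono[OF Xloc_measurable_window]) (use assms[OF i] in auto)
qed

text \<open>The covariance inequality across a gap \<open>g\<close>: with windows of radius \<open>h = g div 3\<close>, the
  approximate products at times \<open>\<le> a\<close> and \<open>\<ge> a + g\<close> are measurable for the past up to
  \<open>a + h\<close> and the future from \<open>a + g - h\<close>, which are \<open>g - 2 h \<ge> h\<close> apart.\<close>
lemma Xloc_prod_covariance:
  fixes jj t :: "'b \<Rightarrow> nat" and I1 I2 :: "'b set"
  assumes t1: "\<And>i. i \<in> I1 \<Longrightarrow> t i \<le> a" and t2: "\<And>i. i \<in> I2 \<Longrightarrow> a + g \<le> t i"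
    and h: "h = g div 3"
  shows "\<bar>(\<integral>\<omega>. (\<Prod>i\<in>I1. Xloc (jj i) (t i) h \<omega>) * (\<Prod>i\<in>I2. Xloc (jj i) (t i) h \<omega>) \<partial>M)
          - (\<integral>\<omega>. (\<Prod>i\<in>I1. Xloc (jj i) (t i) h \<omega>) \<partial>M) * (\<integral>\<omega>. (\<Prod>i\<in>I2. Xloc (jj i) (t i) h \<omega>) \<partial>M)\<bar>
         \<le> 4 * D ^ card I1 * D ^ card I2 * mix_rate h"
proof -
  have "\<bar>(\<integral>\<omega>. (\<Prod>i\<in>I1. Xloc (jj i) (t i) h \<omega>) * (\<Prod>i\<in>I2. Xloc (jj i) (t i) h \<omega>) \<partial>M)
          - (\<integral>\<omega>. (\<Prod>i\<in>I1. Xloc (jj i) (t i) h \<omega>) \<partial>M) * (\<integral>\<omega>. (\<Prod>i\<in>I2. Xloc (jj i) (t i) h \<omega>) \<partial>M)\<bar>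
         \<le> 4 * D ^ card I1 * D ^ card I2 * alpha_mix M F (g - 2 * h)"
  proof (rule covariance_le_alpha[OF F_sub F_sub Xloc_prod_past[where c="a + h"] _
                Xloc_prod_future[where c="a + h + (g - 2 * h)"] _ alpha_mix_upper[where k="a + h"]])
    show "t i + h \<le> a + h" if "i \<in> I1" for i using t1[OF that] by simp
    show "a + h + (g - 2 * h) + h \<le> t i" if "i \<in> I2" for i using t2[OF that] unfolding h by linarith
  qed (rule ext_int_nat ext_int_infinity abs_prod_le_power[OF Xloc_abs])+
  also have "\<dots> \<le> 4 * D ^ card I1 * D ^ card I2 * mix_rate h"
  proof (rule mult_left_mono)
    have "h \<le> g - 2 * h" unfolding h by presburger
    then show "alpha_mix M F (g - 2 * h) \<le> mix_rate h"
      using alpha_decay[of "g - 2 * h"] mix_rate_antimono by (meson order_trans)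
  qed (use D_nonneg in simp)
  finally show ?thesis .
qed

definition split_const :: "nat \<Rightarrow> real" where
  "split_const N = (2 * real N + 4) * D ^ N * exp \<kappa> / \<kappa>"

lemma split_const_nonneg: "0 \<le> split_const N"
  unfolding split_const_def using D_nonneg kappa by simp

text \<open>Pass to the
  approximations on windows of radius \<open>g div 3\<close> (cost \<open>O(N \<beta>)\<close> twice), apply their
  covariance bound, and convert the rate at \<open>g div 3\<close> into the geometric rate in \<open>g\<close>.\<close>
lemma split_decorrelation:
  fixes jj t :: "'b \<Rightarrow> nat" and I1 I2 :: "'b set"
  assumes fin: "finite I1" "finite I2" and dis: "I1 \<inter> I2 = {}"
    and jL: "\<And>i. i \<in> I1 \<union> I2 \<Longrightarrow> jj i \<le> L"
    and t1: "\<And>i. i \<in> I1 \<Longrightarrow> t i \<le> a" and t2: "\<And>i. i \<in> I2 \<Longrightarrow> a + g \<le> t i"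
    and cN: "card (I1 \<union> I2) \<le> N"
  shows "\<bar>(\<integral>\<omega>. (\<Prod>i\<in>I1\<union>I2. Xc (jj i) (t i) \<omega>) \<partial>M)
          - (\<integral>\<omega>. (\<Prod>i\<in>I1. Xc (jj i) (t i) \<omega>) \<partial>M) * (\<integral>\<omega>. (\<Prod>i\<in>I2. Xc (jj i) (t i) \<omega>) \<partial>M)\<bar>
         \<le> split_const N * exp (- \<kappa> / 3) ^ g"
proof -
  define h where "h = g div 3"
  define \<beta> where "\<beta> = mix_rate h"
  define z where "z J = (\<integral>\<omega>. (\<Prod>i\<in>J. Xc (jj i) (t i) \<omega>) \<partial>M)" for J
  define v where "v J = (\<integral>\<omega>. (\<Prod>i\<in>J. Xloc (jj i) (t i) h \<omega>) \<partial>M)" for J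
  have b0: "0 \<le> \<beta>" unfolding \<beta>_def by (rule mix_rate_nonneg)
  have cI: "card (I1 \<union> I2) = card I1 + card I2" using fin dis by (simp add: card_Un_disjoint)
  have DN: "D ^ card (I1 \<union> I2) \<le> D ^ N" using D1 cN by (simp add: power_increasing)
  have within_N: "D ^ card (I1 \<union> I2) * (card (I1 \<union> I2) * \<beta>) \<le> D ^ N * (N * \<beta>)"
    by (rule mult_mono[OF DN]) (use cN b0 D_nonneg in \<open>auto intro: mult_right_mono\<close>)
  have zv: "\<bar>z J - v J\<bar> \<le> D ^ card J * (card J * \<beta>)" if "J \<subseteq> I1 \<union> I2" for J
    unfolding z_def v_def \<beta>_def
    by (rule Xloc_prod_error) (use finite_subset[OF that] fin jL that in auto)
  have v_split: "v (I1 \<union> I2) = (\<integral>\<omega>. (\<Prod>i\<in>I1. Xloc (jj i) (t i) h \<omega>) * (\<Prod>i\<in>I2. Xloc (jj i) (t i) h \<omega>) \<partial>M)"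
    unfolding v_def using fin dis by (simp add: prod.union_disjoint)
  have "\<bar>v (I1 \<union> I2) - v I1 * v I2\<bar> \<le> 4 * D ^ card I1 * D ^ card I2 * \<beta>"
    unfolding v_split unfolding v_def \<beta>_def by (rule Xloc_prod_covariance[OF t1 t2 h_def])
  also have "\<dots> = 4 * D ^ card (I1 \<union> I2) * \<beta>" by (simp add: cI power_add)
  also have "\<dots> \<le> 4 * D ^ N * \<beta>" using DN b0 by (intro mult_right_mono mult_left_mono) auto
  finally have v12: "\<bar>v (I1 \<union> I2) - v I1 * v I2\<bar> \<le> 4 * D ^ N * \<beta>" .
  have "\<bar>v I1 * v I2 - z I1 * z I2\<bar> \<le> \<bar>v I1\<bar> * \<bar>v I2 - z I2\<bar> + \<bar>z I2\<bar> * \<bar>v I1 - z I1\<bar>"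
    by (rule abs_mult_diff_le)
  also have "\<dots> \<le> D ^ card I1 * (D ^ card I2 * (card I2 * \<beta>)) + D ^ card I2 * (D ^ card I1 * (card I1 * \<beta>))"
  proof (intro add_mono mult_mono)
    show "\<bar>v I1\<bar> \<le> D ^ card I1" unfolding v_def
      by (rule abs_integral_le_bound[OF _ abs_prod_le_power[OF Xloc_abs]])
         (auto intro!: borel_measurable_prod Xloc_measurable)
    show "\<bar>z I2\<bar> \<le> D ^ card I2" unfolding z_def
      by (rule abs_integral_le_bound[OF _ abs_prod_le_power[OF Xc_abs]])
         (use jL in \<open>auto intro!: borel_measurable_prod Xc_measurable\<close>)
  qed (use zv[of I1] zv[of I2] D_nonneg b0 in \<open>auto simp: abs_minus_commute\<close>)
  also have "\<dots> = D ^ card (I1 \<union> I2) * (card (I1 \<union> I2) * \<beta>)"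
    by (simp add: cI power_add algebra_simps)
  finally have vz: "\<bar>v I1 * v I2 - z I1 * z I2\<bar> \<le> D ^ N * (N * \<beta>)" using within_N by linarith
  have zv12: "\<bar>z (I1 \<union> I2) - v (I1 \<union> I2)\<bar> \<le> D ^ N * (N * \<beta>)" using zv[of "I1 \<union> I2"] within_N by simp
  have "\<bar>z (I1 \<union> I2) - z I1 * z I2\<bar> \<le> (2 * real N + 4) * D ^ N * \<beta>"
    using zv12 v12 vz by (simp add: algebra_simps)
  also have "\<dots> \<le> (2 * real N + 4) * D ^ N * (exp \<kappa> / \<kappa> * exp (- \<kappa> / 3) ^ g)"
    unfolding \<beta>_def h_def by (rule mult_left_mono[OF mix_rate_third]) (use D_nonneg in auto)
  finally show ?thesis unfolding z_def split_const_def by (simp add: mult.assoc)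
qed

text \<open>The decorrelation bound for products: by induction on the number of factors, split off
  the factor at the largest time \<open>t i0\<close>; the gap \<open>g\<close> to the next largest time \<open>t i1\<close> costs
  \<open>exp(-\<kappa>/3) ^ g\<close>, which is one of the pairs removed from the pair weight.\<close>
lemma product_decorrelation:
  fixes jj t :: "'b \<Rightarrow> nat" and I :: "'b set"
  assumes "finite I" "card I \<le> N" "\<And>i. i \<in> I \<Longrightarrow> jj i \<le> L"
  shows "\<bar>(\<integral>\<omega>. (\<Prod>i\<in>I. Xc (jj i) (t i) \<omega>) \<partial>M) - (\<Prod>i\<in>I. (\<integral>\<omega>. Xc (jj i) (t i) \<omega> \<partial>M))\<bar>
      \<le> split_const N * card I * D ^ card I * pair_weight (exp (- \<kappa> / 3)) t I"
  using assms
proof (induction "card I" arbitrary: I)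
  case 0
  then show ?case by (simp add: prob_space)
next
  case (Suc m)
  let ?\<rho> = "exp (- \<kappa> / 3)"
  let ?z = "\<lambda>J. (\<integral>\<omega>. (\<Prod>i\<in>J. Xc (jj i) (t i) \<omega>) \<partial>M)"
  let ?e = "\<lambda>i. (\<integral>\<omega>. Xc (jj i) (t i) \<omega> \<partial>M)"
  have "I \<noteq> {}" using Suc.hyps(2) by auto
  then obtain i0 where i0: "i0 \<in> I" "\<And>i. i \<in> I \<Longrightarrow> t i \<le> t i0"
    using exists_max_time[OF Suc.prems(1)] by metis
  define I1 where "I1 = I - {i0}"
  have fI1: "finite I1" using Suc.prems(1) by (simp add: I1_def)
  have cI1: "m = card I1" using Suc.hyps(2) Suc.prems(1) i0(1) by (simp add: I1_def)
  have II: "I = I1 \<union> {i0}" using i0(1) by (auto simp: I1_def)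
  have e0: "\<bar>?e i0\<bar> \<le> D"
    by (rule abs_integral_le_bound[OF Xc_measurable Xc_abs]) (use Suc.prems(3) i0 in auto)
  show ?case
  proof (cases "I1 = {}")
    case True
    then show ?thesis using II pair_weight_nonneg[of ?\<rho> t I] split_const_nonneg D_nonneg by simp
  next
    case False
    obtain i1 where i1: "i1 \<in> I1" "\<And>i. i \<in> I1 \<Longrightarrow> t i \<le> t i1" using exists_max_time[OF fI1 False] by blast
    define g where "g = t i0 - t i1"
    have i1I: "i1 \<in> I" "i1 \<noteq> i0" using i1 by (auto simp: I1_def)
    have "\<bar>?z (I1 \<union> {i0}) - ?z I1 * ?z {i0}\<bar> \<le> split_const N * ?\<rho> ^ g"
    proof (rule split_decorrelation[where a="t i1"])
      show "t i1 + g \<le> t i" if "i \<in> {i0}" for i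
        using that i0(2)[OF i1I(1)] by (simp add: g_def)
    qed (use fI1 i1(2) Suc.prems i0(1) in \<open>auto simp: I1_def insert_absorb\<close>)
    then have split: "\<bar>?z I - ?z I1 * ?e i0\<bar> \<le> split_const N * ?\<rho> ^ g" using II[symmetric] by simp
    have IH: "\<bar>?z I1 - (\<Prod>i\<in>I1. ?e i)\<bar> \<le> split_const N * m * D ^ m * pair_weight ?\<rho> t I1"
      unfolding cI1 by (rule Suc.hyps(1)[OF cI1 fI1]) (use Suc.prems Suc.hyps(2) cI1 in \<open>auto simp: I1_def\<close>)
    have "(\<Prod>i\<in>I. ?e i) = (\<Prod>i\<in>I1. ?e i) * ?e i0"
      using prod.remove[OF Suc.prems(1) i0(1), of ?e] by (simp add: I1_def mult.commute)
    then have "\<bar>?z I - (\<Prod>i\<in>I. ?e i)\<bar> \<le> \<bar>?z I - ?z I1 * ?e i0\<bar> + \<bar>?e i0\<bar> * \<bar>?z I1 - (\<Prod>i\<in>I1. ?e i)\<bar>"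
      by (simp add: abs_mult[symmetric] algebra_simps)
    also have "\<dots> \<le> split_const N * ?\<rho> ^ g + D * (split_const N * m * D ^ m * pair_weight ?\<rho> t I1)"
      using split IH e0 D_nonneg by (intro add_mono mult_mono) auto
    also have "\<dots> \<le> split_const N * real (Suc m) * D ^ Suc m * pair_weight ?\<rho> t I"
    proof (rule decorrelation_step_arith[OF split_const_nonneg D1 _ pair_weight_nonneg])
      have "nat_dist (t i0) (t i1) = g" using i0(2)[OF i1I(1)] by (simp add: nat_dist_def g_def)
      then show "pair_weight ?\<rho> t I1 + ?\<rho> ^ g \<le> pair_weight ?\<rho> t I"
        using pair_weight_remove[OF Suc.prems(1) i0(1) i1I, of ?\<rho> t] by (simp add: I1_def)
    qed simp_all
    finally show ?thesis using Suc.hyps(2) by simp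
  qed
qed

definition Xprod :: "(nat \<Rightarrow> nat \<Rightarrow> nat) \<Rightarrow> nat \<Rightarrow> 'a \<Rightarrow> real" where
  "Xprod q k \<omega> = (\<Prod>j\<in>{0..L}. Xc j (q j k) \<omega>)"

definition mean_prod :: real where
  "mean_prod = (\<Prod>j\<in>{0..L}. (\<integral>\<omega>. X j 0 \<omega> \<partial>M))"

definition pair_const :: real where
  "pair_const = split_const (2 * L + 2) * (2 * L + 2) * D ^ (2 * L + 2)"

lemma pair_const_nonneg: "0 \<le> pair_const"
  unfolding pair_const_def using split_const_nonneg D_nonneg by simp

lemma Xprod_measurable: "Xprod q k \<in> borel_measurable M"
  unfolding Xprod_def[abs_def] by (rule borel_measurable_prod) (use Xc_measurable in auto)

lemma Xprod_abs: "\<bar>Xprod q k \<omega>\<bar> \<le> D ^ (L + 1)"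
  unfolding Xprod_def using abs_prod_le_power[of "{0..L}" "\<lambda>j. Xc j (q j k) \<omega>" D] Xc_abs by simp

lemma Xprod_integrable: "integrable M (Xprod q k)"
  by (rule integrable_bounded[OF finite_measure_axioms Xprod_measurable Xprod_abs])

lemma Xprod_mult_integrable: "integrable M (\<lambda>\<omega>. Xprod q k \<omega> * Xprod q k' \<omega>)"
proof (rule integrable_bounded[OF finite_measure_axioms, where B="D ^ (L + 1) * D ^ (L + 1)"])
  show "(\<lambda>\<omega>. Xprod q k \<omega> * Xprod q k' \<omega>) \<in> borel_measurable M" using Xprod_measurable by measurable
  show "\<bar>Xprod q k \<omega> * Xprod q k' \<omega>\<bar> \<le> D ^ (L + 1) * D ^ (L + 1)" for \<omega>
    unfolding abs_mult using D_nonneg by (intro mult_mono Xprod_abs) auto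
qed

lemma Xc_means_prod: "(\<Prod>j\<in>{0..L}. (\<integral>\<omega>. Xc j (q j k) \<omega> \<partial>M)) = mean_prod"
  unfolding mean_prod_def by (rule prod.cong) (auto simp: Xc_mean)

lemma mean_prod_abs: "\<bar>mean_prod\<bar> \<le> D ^ (L + 1)"
proof -
  have "\<bar>(\<Prod>j\<in>{0..L}. (\<integral>\<omega>. Xc j (q j k) \<omega> \<partial>M))\<bar> \<le> D ^ card {0..L}" for q k
    by (rule abs_prod_le_power, rule abs_integral_le_bound[OF Xc_measurable Xc_abs]) auto
  then show ?thesis unfolding Xc_means_prod by simp
qed

lemma Xprod_mean_deviation:
  "\<bar>(\<integral>\<omega>. Xprod q k \<omega> \<partial>M) - mean_prod\<bar> \<le> pair_const * pair_weight (exp (- \<kappa> / 3)) (\<lambda>j. q j k) {0..L}"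
proof -
  have "\<bar>(\<integral>\<omega>. (\<Prod>j\<in>{0..L}. Xc j (q j k) \<omega>) \<partial>M) - (\<Prod>j\<in>{0..L}. (\<integral>\<omega>. Xc j (q j k) \<omega> \<partial>M))\<bar>
      \<le> split_const (2 * L + 2) * real (L + 1) * D ^ (L + 1) * pair_weight (exp (- \<kappa> / 3)) (\<lambda>j. q j k) {0..L}"
    using product_decorrelation[of "{0..L}" "2 * L + 2" "\<lambda>j. j" "\<lambda>j. q j k"] by simp
  also have "\<dots> \<le> pair_const * pair_weight (exp (- \<kappa> / 3)) (\<lambda>j. q j k) {0..L}"
    unfolding pair_const_def
  proof (intro mult_right_mono pair_weight_nonneg)
    have "D ^ (L + 1) \<le> D ^ (2 * L + 2)" by (rule power_increasing) (use D1 in auto)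
    then show "split_const (2 * L + 2) * real (L + 1) * D ^ (L + 1)
               \<le> split_const (2 * L + 2) * real (2 * L + 2) * D ^ (2 * L + 2)"
      using split_const_nonneg D_nonneg by (intro mult_mono) auto
  qed auto
  finally show ?thesis unfolding Xprod_def Xc_means_prod .
qed

lemma Xprod_pair_mean_deviation:
  "\<bar>(\<integral>\<omega>. Xprod q k \<omega> * Xprod q k' \<omega> \<partial>M) - mean_prod * mean_prod\<bar>
     \<le> pair_const * pair_weight (exp (- \<kappa> / 3)) (doubled_times q k k') ({0..L} \<times> UNIV)"
proof -
  let ?I = "{0..L} \<times> (UNIV :: bool set)"
  have split_prod: "(\<Prod>i\<in>?I. f i) = (\<Prod>j\<in>{0..L}. f (j, False)) * (\<Prod>j\<in>{0..L}. f (j, True))"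
    for f :: "nat \<times> bool \<Rightarrow> real"
  proof -
    have "(\<Prod>i\<in>?I. f i) = (\<Prod>j\<in>{0..L}. \<Prod>b\<in>UNIV. f (j, b))"
      by (simp add: prod.cartesian_product)
    also have "\<dots> = (\<Prod>j\<in>{0..L}. f (j, False) * f (j, True))"
      by (simp add: UNIV_bool)
    finally show ?thesis by (simp add: prod.distrib)
  qed
  have "\<bar>(\<integral>\<omega>. (\<Prod>i\<in>?I. Xc (fst i) (doubled_times q k k' i) \<omega>) \<partial>M)
          - (\<Prod>i\<in>?I. (\<integral>\<omega>. Xc (fst i) (doubled_times q k k' i) \<omega> \<partial>M))\<bar>
      \<le> split_const (2 * L + 2) * real (card ?I) * D ^ card ?I * pair_weight (exp (- \<kappa> / 3)) (doubled_times q k k') ?I"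
    by (rule product_decorrelation) (auto simp: card_cartesian_product)
  moreover have "(\<Prod>i\<in>?I. Xc (fst i) (doubled_times q k k' i) \<omega>) = Xprod q k \<omega> * Xprod q k' \<omega>" for \<omega>
    unfolding split_prod by (simp add: Xprod_def doubled_times_def)
  moreover have "(\<Prod>i\<in>?I. (\<integral>\<omega>. Xc (fst i) (doubled_times q k k' i) \<omega> \<partial>M)) = mean_prod * mean_prod"
    unfolding split_prod using Xc_means_prod[of q k] Xc_means_prod[of q k'] by (simp add: doubled_times_def)
  ultimately show ?thesis by (simp add: pair_const_def card_cartesian_product mult_ac)
qed

lemma centred_Xprod_covariance:
  "\<bar>\<integral>\<omega>. (Xprod q k \<omega> - mean_prod) * (Xprod q k' \<omega> - mean_prod) \<partial>M\<bar>
    \<le> pair_const * (pair_weight (exp (- \<kappa> / 3)) (doubled_times q k k') ({0..L} \<times> UNIV)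
        + D ^ (L + 1) * (pair_weight (exp (- \<kappa> / 3)) (\<lambda>j. q j k) {0..L}
                         + pair_weight (exp (- \<kappa> / 3)) (\<lambda>j. q j k') {0..L}))"
proof -
  let ?P = "Xprod q k" and ?P' = "Xprod q k'" and ?a = mean_prod
  have i1: "integrable M (\<lambda>\<omega>. ?P \<omega> * ?P' \<omega> - ?a * ?P \<omega>)"
    using Xprod_mult_integrable Xprod_integrable by auto
  have i2: "integrable M (\<lambda>\<omega>. ?P \<omega> * ?P' \<omega> - ?a * ?P \<omega> - ?a * ?P' \<omega>)"
    using i1 Xprod_integrable by auto
  have "(\<integral>\<omega>. (?P \<omega> - ?a) * (?P' \<omega> - ?a) \<partial>M)
      = (\<integral>\<omega>. (?P \<omega> * ?P' \<omega> - ?a * ?P \<omega> - ?a * ?P' \<omega>) + ?a * ?a \<partial>M)"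
    by (rule Bochner_Integration.integral_cong) (auto simp: algebra_simps)
  also have "\<dots> = (\<integral>\<omega>. ?P \<omega> * ?P' \<omega> \<partial>M) - ?a * (\<integral>\<omega>. ?P \<omega> \<partial>M) - ?a * (\<integral>\<omega>. ?P' \<omega> \<partial>M) + ?a * ?a"
    using i1 i2 Xprod_mult_integrable Xprod_integrable by (simp add: prob_space)
  also have "\<dots> = ((\<integral>\<omega>. ?P \<omega> * ?P' \<omega> \<partial>M) - ?a * ?a)
                 - ?a * ((\<integral>\<omega>. ?P \<omega> \<partial>M) - ?a) - ?a * ((\<integral>\<omega>. ?P' \<omega> \<partial>M) - ?a)"
    by (simp add: algebra_simps)
  finally have expand: "(\<integral>\<omega>. (?P \<omega> - ?a) * (?P' \<omega> - ?a) \<partial>M) = \<dots>" .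
  have dev: "\<bar>?a * ((\<integral>\<omega>. Xprod q k'' \<omega> \<partial>M) - ?a)\<bar>
      \<le> D ^ (L + 1) * (pair_const * pair_weight (exp (- \<kappa> / 3)) (\<lambda>j. q j k'') {0..L})" for k''
    unfolding abs_mult by (rule mult_mono[OF mean_prod_abs Xprod_mean_deviation]) (use D_nonneg in auto)
  show ?thesis unfolding expand using Xprod_pair_mean_deviation[of q k k'] dev[of k] dev[of k']
    by (simp add: algebra_simps)
qed

lemma second_moment_le:
  fixes q :: "nat \<Rightarrow> nat \<Rightarrow> nat" and B1 B2 :: real
  assumes B1: "\<And>j x. j \<le> L \<Longrightarrow> (\<Sum>k\<in>{0..n}. exp (- \<kappa> / 3) ^ nat_dist x (q j k)) \<le> B1"
    and B2: "\<And>j j'. j \<le> L \<Longrightarrow> j' \<le> L \<Longrightarrow> j \<noteq> j' \<Longrightarrow>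
               (\<Sum>k\<in>{0..n}. exp (- \<kappa> / 3) ^ nat_dist (q j k) (q j' k)) \<le> B2"
    and B1nn: "0 \<le> B1" and B2nn: "0 \<le> B2"
  shows "(\<integral>\<omega>. (\<Sum>k = 0..n. (\<Prod>j = 0..L. X j (q j k) \<omega>) - (\<Prod>j = 0..L. (\<integral>\<omega>'. X j 0 \<omega>' \<partial>M))) ^ 2 \<partial>M)
     \<le> pair_const * (real (2 * L + 2) * real (2 * L + 2) * (B1 + B2)
                     + 2 * D ^ (L + 1) * (real (L + 1) * real (L + 1) * B2)) * real (n + 1)"
proof -
  let ?\<rho> = "exp (- \<kappa> / 3)" and ?S = "{0..n}"
  let ?R = "\<lambda>k \<omega>. Xprod q k \<omega> - mean_prod"
  let ?W = "\<lambda>k. pair_weight ?\<rho> (\<lambda>j. q j k) {0..L}"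
  let ?W2 = "\<lambda>k k'. pair_weight ?\<rho> (doubled_times q k k') ({0..L} \<times> UNIV)"
  have R_int: "integrable M (\<lambda>\<omega>. ?R k \<omega> * ?R k' \<omega>)" for k k'
    using Xprod_mult_integrable Xprod_integrable by (simp add: algebra_simps)
  have "(\<integral>\<omega>. (\<Sum>k = 0..n. (\<Prod>j = 0..L. X j (q j k) \<omega>) - (\<Prod>j = 0..L. (\<integral>\<omega>'. X j 0 \<omega>' \<partial>M))) ^ 2 \<partial>M)
      = (\<integral>\<omega>. (\<Sum>k\<in>?S. ?R k \<omega>) ^ 2 \<partial>M)"
  proof (rule integral_cong_AE)
    show "AE \<omega> in M. (\<Sum>k = 0..n. (\<Prod>j = 0..L. X j (q j k) \<omega>) - (\<Prod>j = 0..L. (\<integral>\<omega>'. X j 0 \<omega>' \<partial>M))) ^ 2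
               = (\<Sum>k\<in>?S. ?R k \<omega>) ^ 2"
      using Xc_AE by eventually_elim (simp add: Xprod_def mean_prod_def)
  qed (use X_meas Xprod_measurable in measurable)
  also have "\<dots> = (\<Sum>k\<in>?S. \<Sum>k'\<in>?S. (\<integral>\<omega>. ?R k \<omega> * ?R k' \<omega> \<partial>M))"
    using R_int by (simp add: power2_eq_square sum_product Bochner_Integration.integral_sum)
  also have "\<dots> \<le> (\<Sum>k\<in>?S. \<Sum>k'\<in>?S. pair_const * (?W2 k k' + D ^ (L + 1) * (?W k + ?W k')))"
    by (intro sum_mono order_trans[OF abs_ge_self centred_Xprod_covariance])
  also have "\<dots> = pair_const * ((\<Sum>k\<in>?S. \<Sum>k'\<in>?S. ?W2 k k') + D ^ (L + 1) * (2 * (real (n + 1) * (\<Sum>k\<in>?S. ?W k))))"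
    by (simp add: sum_distrib_left sum.distrib algebra_simps sum.swap[of "\<lambda>k k'. ?W k"])
  also have "\<dots> \<le> pair_const * (real (2 * L + 2) * real (2 * L + 2) * (real (n + 1) * (B1 + B2))
                    + D ^ (L + 1) * (2 * (real (n + 1) * (real (L + 1) * real (L + 1) * B2))))"
    using sum_pair_weight_double[OF B1 B2 B1nn B2nn] sum_pair_weight_single[OF B2 B2nn]
      pair_const_nonneg D_nonneg
    by (intro mult_left_mono add_mono) auto
  also have "\<dots> = pair_const * (real (2 * L + 2) * real (2 * L + 2) * (B1 + B2)
                     + 2 * D ^ (L + 1) * (real (L + 1) * real (L + 1) * B2)) * real (n + 1)"
    by (simp add: algebra_simps)
  finally show ?thesis .
qed

lemma second_moment_linear:
  fixes q :: "nat \<Rightarrow> nat \<Rightarrow> nat"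
  assumes "\<exists>B1 B2. 0 \<le> B1 \<and> 0 \<le> B2
    \<and> (\<forall>j x A. j \<le> L \<longrightarrow> finite A \<longrightarrow> (\<Sum>k\<in>A. exp (- \<kappa> / 3) ^ nat_dist x (q j k)) \<le> B1)
    \<and> (\<forall>j j' A. j \<le> L \<longrightarrow> j' \<le> L \<longrightarrow> j \<noteq> j' \<longrightarrow> finite A \<longrightarrow>
         (\<Sum>k\<in>A. exp (- \<kappa> / 3) ^ nat_dist (q j k) (q j' k)) \<le> B2)"
  shows "\<exists>C > 0. \<forall>n::nat. n \<ge> 1 \<longrightarrow>
           (\<integral>\<omega>. (\<Sum>k = 0..n. (\<Prod>j = 0..L. X j (q j k) \<omega>)
                               - (\<Prod>j = 0..L. (\<integral>\<omega>'. X j 0 \<omega>' \<partial>M))) ^ 2 \<partial>M) \<le> C * real n"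
proof -
  obtain B1 B2 where B: "0 \<le> B1" "0 \<le> B2"
    "\<And>j x A. j \<le> L \<Longrightarrow> finite A \<Longrightarrow> (\<Sum>k\<in>A. exp (- \<kappa> / 3) ^ nat_dist x (q j k)) \<le> B1"
    "\<And>j j' A. j \<le> L \<Longrightarrow> j' \<le> L \<Longrightarrow> j \<noteq> j' \<Longrightarrow> finite A \<Longrightarrow>
       (\<Sum>k\<in>A. exp (- \<kappa> / 3) ^ nat_dist (q j k) (q j' k)) \<le> B2"
    using assms by blast
  define C where "C = pair_const * (real (2 * L + 2) * real (2 * L + 2) * (B1 + B2)
                     + 2 * D ^ (L + 1) * (real (L + 1) * real (L + 1) * B2))"
  have C: "0 \<le> C" unfolding C_def using pair_const_nonneg B D_nonneg by simp
  show ?thesis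
  proof (intro exI[of _ "2 * C + 1"] conjI allI impI)
    fix n :: nat assume n: "1 \<le> n"
    have "(\<integral>\<omega>. (\<Sum>k = 0..n. (\<Prod>j = 0..L. X j (q j k) \<omega>)
                               - (\<Prod>j = 0..L. (\<integral>\<omega>'. X j 0 \<omega>' \<partial>M))) ^ 2 \<partial>M) \<le> C * real (n + 1)"
      unfolding C_def by (rule second_moment_le) (use B in auto)
    also have "\<dots> \<le> (2 * C + 1) * real n" using n C mult_left_mono[OF _ C, of 1 "real n"] by (simp add: algebra_simps)
    finally show "(\<integral>\<omega>. (\<Sum>k = 0..n. (\<Prod>j = 0..L. X j (q j k) \<omega>)
                               - (\<Prod>j = 0..L. (\<integral>\<omega>'. X j 0 \<omega>' \<partial>M))) ^ 2 \<partial>M) \<le> (2 * C + 1) * real n" .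
  qed (use C in simp)
qed

end

theorem lemma5p1:
  fixes M :: "'a measure"
    and L :: nat
    and X :: "nat \<Rightarrow> nat \<Rightarrow> 'a \<Rightarrow> real"
    and D :: real
    and F :: "ereal \<Rightarrow> ereal \<Rightarrow> 'a measure"
    and \<kappa> :: real
    and q :: "nat \<Rightarrow> nat \<Rightarrow> nat"
    and r p :: nat
    and \<gamma> :: real
    and n0 :: nat
  assumes P: "prob_space M"
    and l: "L \<ge> 1"
    and X_meas: "\<And>j n. j \<le> L \<Longrightarrow> X j n \<in> borel_measurable M"
    and X_stat: "\<And>j. j \<le> L \<Longrightarrow> stationary_proc M (X j)"
    and X_bdd: "\<And>j n. j \<le> L \<Longrightarrow> AE \<omega> in M. \<bar>X j n \<omega>\<bar> \<le> D"
    and F_sub: "\<And>k l. k \<in> ext_int_idx \<Longrightarrow> l \<in> ext_int_idx \<Longrightarrow> subalgebra M (F k l)"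
    and F_mono: "\<And>k l k' l'. k \<in> ext_int_idx \<Longrightarrow> l \<in> ext_int_idx \<Longrightarrow> k' \<in> ext_int_idx \<Longrightarrow>
                   l' \<in> ext_int_idx \<Longrightarrow> k' \<le> k \<Longrightarrow> l \<le> l' \<Longrightarrow> sets (F k l) \<subseteq> sets (F k' l')"
    and kappa: "\<kappa> > 0"
    and mixing: "\<And>n. alpha_mix M F n + Max ((\<lambda>j. beta_mix M F (X j) n) ` {0..L})
                        \<le> exp (- \<kappa> * real n) / \<kappa>"
    and q0: "\<And>n. q 0 n = n"
    and r: "r \<ge> 2"
    and q1: "\<And>n. q 1 n = r * n + p"
    and gamma: "0 < \<gamma>" "\<gamma> < 1"
    and n0: "n0 > 1"
    and q_growth: "\<And>j n. 2 \<le> j \<Longrightarrow> j \<le> L \<Longrightarrow> n \<ge> n0 \<Longrightarrow>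
                     real (q j (n + 1)) \<ge> real (q j n) + real n powr \<gamma>"
    and q_nest: "\<And>j n. 1 \<le> j \<Longrightarrow> j \<le> L - 1 \<Longrightarrow> n \<ge> n0 \<Longrightarrow>
                     real (q (j + 1) (nat \<lfloor>real n powr (1 - \<gamma>)\<rfloor>)) \<ge> real (q j n) * real n powr \<gamma>"
  shows "\<exists>C > 0. \<forall>n::nat. n \<ge> 1 \<longrightarrow>
           (\<integral>\<omega>. (\<Sum>k = 0..n. (\<Prod>j = 0..L. X j (q j k) \<omega>)
                               - (\<Prod>j = 0..L. (\<integral>\<omega>'. X j 0 \<omega>' \<partial>M))) ^ 2 \<partial>M) \<le> C * real n"
proof -
  text \<open>The bound \<open>D\<close> may be enlarged to \<open>max D 1\<close>.\<close>
  interpret mixing_setting M L X "max D 1" F \<kappa>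
  proof (intro mixing_setting.intro[OF P] mixing_setting_axioms.intro)
    show "AE \<omega> in M. \<bar>X j n \<omega>\<bar> \<le> max D 1" if "j \<le> L" for j n
      using X_bdd[OF that, of n] by eventually_elim auto
  qed (use X_meas X_stat F_sub F_mono kappa mixing in auto)
  interpret times: admissible_times L q r p n0 \<gamma>
    by unfold_locales (use q0 r q1 gamma n0 q_growth q_nest in auto)
  show ?thesis
    by (rule second_moment_linear[OF times.decay_sums_bounded]) (use kappa in auto)
qed

end
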